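(* Let $n\ge2$ and $l,m\in\mathbb Z_{\ge0}$. An element $\phi\in\mathcal Z_n(l,m)$ is $\mathcal U_q(n-1)$-invariant if and only if it has the form $$\phi=\sum_{j=0}^{\min(l,m)}c_j\,z_n^{\,l-j}w_n^{\,m-j}Q_n^{\,j}\qquad(c_j\in\mathbb C).$$ In particular, the space of $\mathcal U_q(n-1)$-invariant elements of $\mathcal Z_n(l,m)$ has dimension $\min(l,m)+1$.
   Context: Fix $0<q<1$. $\mathcal Z_n$ is the unital complex $*$-algebra generated by $z_1,\dots,z_n,w_1,\dots,w_n$ subject to $z_iz_j=qz_jz_i$ $(i<j)$, $w_jw_i=qw_iw_j$ $(i<j)$, $w_iz_j=qz_jw_i$ $(i\ne j)$, $w_iz_i=z_iw_i+(1-q^2)\sum_{k<i}z_kw_k$, with involution $z_i^*=w_i$. $z^\lambda w^\mu=z_1^{\lambda_1}\cdots z_n^{\lambda_n}w_n^{\mu_n}\cdots w_1^{\mu_1}$ (a basis), $|\lambda|=\sum\lambda_i$, $Q_i=\sum_{k=1}^iz_kw_k$; $\mathcal Z_n(l,m)$ is the span of the $z^\lambda w^\mu$ with $|\lambda|=l,|\mu|=m$. Operators: for $h\in\mathbb Z^n$, $1\le k\le n-1$, unit vectors $\epsilon_i$, $\langle h,\lambda\rangle=\sum h_i\lambda_i$, $[a]_{q^{-2}}=(1-q^{-2a})/(1-q^{-2})$, terms with a negative exponent being $0$: $q^h.z^\lambda w^\mu=q^{\langle h,\lambda-\mu\rangle}z^\lambda w^\mu$; $f_k.z^\lambda w^\mu=-q^{\mu_k+1}[\mu_{k+1}]_{q^{-2}}z^\lambda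 w^{\mu-\epsilon_{k+1}+\epsilon_k}+q^{\lambda_{k+1}+\mu_k-\mu_{k+1}}[\lambda_k]_{q^{-2}}z^{\lambda-\epsilon_k+\epsilon_{k+1}}w^\mu$; $e_k.z^\lambda w^\mu=-q^{-1}q^{\mu_{k+1}+\lambda_k-\lambda_{k+1}}[\mu_k]_{q^{-2}}z^\lambda w^{\mu+\epsilon_{k+1}-\epsilon_k}+q^{\lambda_k}[\lambda_{k+1}]_{q^{-2}}z^{\lambda+\epsilon_k-\epsilon_{k+1}}w^\mu$. $\phi$ is $\mathcal U_q(n-p)$-invariant if $q^{\epsilon_i}.\phi=\phi$ ($1\le i\le n-p$) and $e_k.\phi=f_k.\phi=0$ ($1\le k\le n-p-1$). *)

theory Defs
  imports Complex_Main
begin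

text \<open>
  The algebra Z_n is represented abstractly: a ring 'a together with a central ring
  homomorphism sc from the complex numbers (making 'a a complex algebra), generators
  z i, w i (1 \<le> i \<le> n) satisfying the defining relations, and such that the ordered
  monomials z^lambda w^mu form a C-basis.  Any such algebra is isomorphic to Z_n.
  Multi-indices are functions nat \<Rightarrow> nat supported in {1..n}.
\<close>

definition mi :: "nat \<Rightarrow> (nat \<Rightarrow> nat) \<Rightarrow> bool" where
  "mi n la \<longleftrightarrow> (\<forall>i. (i = 0 \<or> n < i) \<longrightarrow> la i = 0)"

definition mono :: "(nat \<Rightarrow> 'a::ring_1) \<Rightarrow> (nat \<Rightarrow> 'a) \<Rightarrow> nat \<Rightarrow> (nat \<Rightarrow> nat) \<Rightarrow> (nat \<Rightarrow> nat) \<Rightarrow> 'a" where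
  "mono z w n la mu =
     prod_list (map (\<lambda>i. z i ^ la i) [1..<Suc n]) * prod_list (map (\<lambda>i. w i ^ mu i) (rev [1..<Suc n]))"

definition csupp :: "('b \<Rightarrow> complex) \<Rightarrow> 'b set" where
  "csupp c = {p. c p \<noteq> 0}"

definition good :: "nat \<Rightarrow> ((nat \<Rightarrow> nat) \<times> (nat \<Rightarrow> nat) \<Rightarrow> complex) \<Rightarrow> bool" where
  "good n c \<longleftrightarrow> finite (csupp c) \<and> (\<forall>p \<in> csupp c. mi n (fst p) \<and> mi n (snd p))"

definition lincomb :: "(complex \<Rightarrow> 'a::ring_1) \<Rightarrow> (nat \<Rightarrow> 'a) \<Rightarrow> (nat \<Rightarrow> 'a) \<Rightarrow> nat
     \<Rightarrow> ((nat \<Rightarrow> nat) \<times> (nat \<Rightarrow> nat) \<Rightarrow> complex) \<Rightarrow> 'a" where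
  "lincomb sc z w n c = (\<Sum>p\<in>csupp c. sc (c p) * mono z w n (fst p) (snd p))"

text \<open>The defining data of Z_n (with 0 < q < 1 given separately), including the PBW basis property.\<close>
definition Zn_alg :: "nat \<Rightarrow> real \<Rightarrow> (complex \<Rightarrow> 'a::ring_1) \<Rightarrow> (nat \<Rightarrow> 'a) \<Rightarrow> (nat \<Rightarrow> 'a) \<Rightarrow> bool" where
  "Zn_alg n q sc z w \<longleftrightarrow>
     (\<forall>a b. sc (a + b) = sc a + sc b) \<and> (\<forall>a b. sc (a * b) = sc a * sc b) \<and> sc 1 = 1 \<and>
     (\<forall>a x. sc a * x = x * sc a) \<and>
     (\<forall>i\<in>{1..n}. \<forall>j\<in>{1..n}. i < j \<longrightarrow> z i * z j = sc (of_real q) * z j * z i) \<and>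
     (\<forall>i\<in>{1..n}. \<forall>j\<in>{1..n}. i < j \<longrightarrow> w j * w i = sc (of_real q) * w i * w j) \<and>
     (\<forall>i\<in>{1..n}. \<forall>j\<in>{1..n}. i \<noteq> j \<longrightarrow> w i * z j = sc (of_real q) * z j * w i) \<and>
     (\<forall>i\<in>{1..n}. w i * z i = z i * w i + sc (of_real (1 - q\<^sup>2)) * (\<Sum>k\<in>{1..<i}. z k * w k)) \<and>
     (\<forall>x. \<exists>!c. good n c \<and> lincomb sc z w n c = x)"

definition coord :: "nat \<Rightarrow> (complex \<Rightarrow> 'a::ring_1) \<Rightarrow> (nat \<Rightarrow> 'a) \<Rightarrow> (nat \<Rightarrow> 'a) \<Rightarrow> 'a
     \<Rightarrow> ((nat \<Rightarrow> nat) \<times> (nat \<Rightarrow> nat) \<Rightarrow> complex)" where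
  "coord n sc z w x = (THE c. good n c \<and> lincomb sc z w n c = x)"

definition Q :: "(nat \<Rightarrow> 'a::ring_1) \<Rightarrow> (nat \<Rightarrow> 'a) \<Rightarrow> nat \<Rightarrow> 'a" where
  "Q z w i = (\<Sum>k\<in>{1..i}. z k * w k)"

definition deg :: "nat \<Rightarrow> (nat \<Rightarrow> nat) \<Rightarrow> nat" where
  "deg n la = (\<Sum>i\<in>{1..n}. la i)"

definition Zlm :: "nat \<Rightarrow> (complex \<Rightarrow> 'a::ring_1) \<Rightarrow> (nat \<Rightarrow> 'a) \<Rightarrow> (nat \<Rightarrow> 'a) \<Rightarrow> nat \<Rightarrow> nat \<Rightarrow> 'a set" where
  "Zlm n sc z w l m = {x. \<forall>p. coord n sc z w x p \<noteq> 0 \<longrightarrow> deg n (fst p) = l \<and> deg n (snd p) = m}"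

definition qbr :: "real \<Rightarrow> nat \<Rightarrow> real" where
  "qbr q a = (1 - q powi (- 2 * int a)) / (1 - q powi (- 2))"

definition act :: "nat \<Rightarrow> (complex \<Rightarrow> 'a::ring_1) \<Rightarrow> (nat \<Rightarrow> 'a) \<Rightarrow> (nat \<Rightarrow> 'a)
     \<Rightarrow> ((nat \<Rightarrow> nat) \<Rightarrow> (nat \<Rightarrow> nat) \<Rightarrow> 'a) \<Rightarrow> 'a \<Rightarrow> 'a" where
  "act n sc z w T x = (\<Sum>p\<in>csupp (coord n sc z w x). sc (coord n sc z w x p) * T (fst p) (snd p))"

definition qe_mono :: "nat \<Rightarrow> real \<Rightarrow> (complex \<Rightarrow> 'a::ring_1) \<Rightarrow> (nat \<Rightarrow> 'a) \<Rightarrow> (nat \<Rightarrow> 'a) \<Rightarrow> nat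
     \<Rightarrow> (nat \<Rightarrow> nat) \<Rightarrow> (nat \<Rightarrow> nat) \<Rightarrow> 'a" where
  "qe_mono n q sc z w i la mu = sc (of_real (q powi (int (la i) - int (mu i)))) * mono z w n la mu"

text \<open>f_k on monomials (terms with a negative exponent are 0)\<close>
definition f_mono :: "nat \<Rightarrow> real \<Rightarrow> (complex \<Rightarrow> 'a::ring_1) \<Rightarrow> (nat \<Rightarrow> 'a) \<Rightarrow> (nat \<Rightarrow> 'a) \<Rightarrow> nat
     \<Rightarrow> (nat \<Rightarrow> nat) \<Rightarrow> (nat \<Rightarrow> nat) \<Rightarrow> 'a" where
  "f_mono n q sc z w k la mu =
     (if mu (Suc k) = 0 then 0 else
        sc (of_real (- (q ^ (mu k + 1) * qbr q (mu (Suc k)))))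
          * mono z w n la (mu(Suc k := mu (Suc k) - 1, k := mu k + 1)))
   + (if la k = 0 then 0 else
        sc (of_real (q powi (int (la (Suc k)) + int (mu k) - int (mu (Suc k))) * qbr q (la k)))
          * mono z w n (la(k := la k - 1, Suc k := la (Suc k) + 1)) mu)"

text \<open>e_k on monomials (terms with a negative exponent are 0)\<close>
definition e_mono :: "nat \<Rightarrow> real \<Rightarrow> (complex \<Rightarrow> 'a::ring_1) \<Rightarrow> (nat \<Rightarrow> 'a) \<Rightarrow> (nat \<Rightarrow> 'a) \<Rightarrow> nat
     \<Rightarrow> (nat \<Rightarrow> nat) \<Rightarrow> (nat \<Rightarrow> nat) \<Rightarrow> 'a" where
  "e_mono n q sc z w k la mu =
     (if mu k = 0 then 0 else
        sc (of_real (- (inverse q * q powi (int (mu (Suc k)) + int (la k) - int (la (Suc k))) * qbr q (mu k))))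
          * mono z w n la (mu(Suc k := mu (Suc k) + 1, k := mu k - 1)))
   + (if la (Suc k) = 0 then 0 else
        sc (of_real (q ^ (la k) * qbr q (la (Suc k))))
          * mono z w n (la(k := la k + 1, Suc k := la (Suc k) - 1)) mu)"

definition Uinv :: "nat \<Rightarrow> real \<Rightarrow> (complex \<Rightarrow> 'a::ring_1) \<Rightarrow> (nat \<Rightarrow> 'a) \<Rightarrow> (nat \<Rightarrow> 'a) \<Rightarrow> nat \<Rightarrow> 'a \<Rightarrow> bool" where
  "Uinv n q sc z w p x \<longleftrightarrow>
     (\<forall>i\<in>{1..n-p}. act n sc z w (qe_mono n q sc z w i) x = x) \<and>
     (\<forall>k\<in>{1..n-p-1}. act n sc z w (e_mono n q sc z w k) x = 0 \<and> act n sc z w (f_mono n q sc z w k) x = 0)"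

end

theory Submission
  imports Defs
begin

(* In the basis of ordered monomials z^la w^mu everything is computed coefficientwise.
   The weights q^(eps_i), i < n, force la_i = mu_i (i < n) on the support of an invariant
   element. On such diagonal indices f_k relates the coefficient at la to the one at the index
   obtained by moving a unit from slot k+1 to slot k; weighted by prod_(i<n) [la_i]! the
   coefficient is unchanged by such moves, and as the moves lower sum_i (i - 1) la_i, every
   diagonal index is moved to a corner (s, 0, ..., 0, l - s). So an invariant element is
   determined by one scalar for each s = la_1 + ... + la_(n-1) <= min l m, and conversely every
   coefficient pattern of this shape is annihilated by all e_k and f_k. The q-multinomial
   expansion of Q_n^j shows that z_n^(l-j) w_n^(m-j) Q_n^j has such a pattern, whose scalars form
   a triangular matrix in (j, s) with nonzero diagonal; hence these elements are a basis. *)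

section \<open>q-integers and q-factorials\<close>

lemma power_int_eq_1_imp_eq_0:
  fixes q :: real
  assumes "0 < q" "q < 1" "q powi d = 1"
  shows "d = 0"
  using power_int_strict_decreasing[of 0 d q] power_int_strict_decreasing[of d 0 q] assms
  by (cases d "0::int" rule: linorder_cases) auto

lemma qbr_0 [simp]: "qbr q 0 = 0"
  by (simp add: qbr_def)

lemma qbr_geometric:
  assumes "0 < q"
  shows "qbr q a = (1 - (inverse q ^ 2) ^ a) / (1 - inverse q ^ 2)"
proof -
  have "q powi (- 2 * int a) = (inverse q ^ 2) ^ a"
    by (simp add: power_int_def nat_mult_distrib power_mult)
  moreover have "q powi (- 2) = inverse q ^ 2"
    by (simp add: power_int_def)
  ultimately show ?thesis by (simp add: qbr_def)
qed

lemma qbr_pos: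
  assumes "0 < q" "q < 1" "a \<noteq> 0"
  shows "0 < qbr q a"
proof -
  have r: "1 < inverse q ^ 2"
    using assms by (simp add: one_less_inverse one_less_power)
  then have "1 < (inverse q ^ 2) ^ a"
    using assms(3) by (simp add: one_less_power)
  then show ?thesis
    using r qbr_geometric[OF assms(1)] by (simp add: divide_neg_neg)
qed

lemma qbr_add:
  assumes "0 < q"
  shows "qbr q (a + b) = qbr q a + (inverse q ^ 2) ^ a * qbr q b"
proof -
  define r where "r = inverse q ^ 2"
  have "(1 - r ^ (a + b)) / (1 - r) = (1 - r ^ a) / (1 - r) + r ^ a * ((1 - r ^ b) / (1 - r))"
    by (simp add: power_add diff_divide_distrib right_diff_distrib)
  then show ?thesis unfolding qbr_geometric[OF assms] r_def .
qed

lemma qbr_sum: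
  fixes N :: nat
  assumes "0 < q"
  shows "(\<Sum>k = 1..N. qbr q (f k) * (inverse q ^ 2) ^ (\<Sum>i = 1..<k. f i)) = qbr q (\<Sum>i = 1..N. f i)"
proof (induction N)
  case (Suc N)
  have "{1..<Suc N} = {1..N}" by auto
  with Suc.IH show ?case
    by (simp add: qbr_add[OF assms] mult.commute)
qed simp

definition qfact :: "real \<Rightarrow> nat \<Rightarrow> real" where
  "qfact q a = (\<Prod>i = 1..a. qbr q i)"

lemma qfact_0 [simp]: "qfact q 0 = 1"
  by (simp add: qfact_def)

lemma qfact_Suc: "qfact q (Suc a) = qfact q a * qbr q (Suc a)"
  by (simp add: qfact_def)

lemma qfact_pos: "0 < q \<Longrightarrow> q < 1 \<Longrightarrow> 0 < qfact q a"
  unfolding qfact_def by (rule prod_pos) (auto intro: qbr_pos)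

section \<open>Triangular linear systems\<close>

lemma triangular_system_solvable:
  fixes G :: "nat \<Rightarrow> nat \<Rightarrow> 'a::field"
  assumes above_diagonal: "\<And>j s. j < s \<Longrightarrow> G j s = 0" and diagonal: "\<And>j. G j j \<noteq> 0"
  shows "\<exists>c. \<forall>s\<le>K. g s = (\<Sum>j = 0..K. c j * G j s)"
proof (induction K arbitrary: g)
  case 0
  show ?case
    by (rule exI[of _ "\<lambda>j. g 0 / G 0 0"]) (simp add: diagonal)
next
  case (Suc K)
  define cK where "cK = g (Suc K) / G (Suc K) (Suc K)"
  obtain c where c: "\<forall>s\<le>K. g s - cK * G (Suc K) s = (\<Sum>j = 0..K. c j * G j s)"
    using Suc.IH[of "\<lambda>s. g s - cK * G (Suc K) s"] by blast
  have "g s = (\<Sum>j = 0..Suc K. (c(Suc K := cK)) j * G j s)" if "s \<le> Suc K" for s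
  proof (cases "s \<le> K")
    case True
    then show ?thesis
      using c by (simp add: algebra_simps)
  next
    case False
    then have "s = Suc K" using that by simp
    moreover have "(\<Sum>j = 0..K. c j * G j (Suc K)) = 0"
      by (rule sum.neutral) (simp add: above_diagonal)
    ultimately show ?thesis
      using diagonal[of "Suc K"] by (simp add: cK_def)
  qed
  then show ?case by blast
qed

lemma triangular_system_unique:
  fixes G :: "nat \<Rightarrow> nat \<Rightarrow> 'a::field"
  assumes above_diagonal: "\<And>j s. j < s \<Longrightarrow> G j s = 0" and diagonal: "\<And>j. G j j \<noteq> 0"
    and zero: "\<forall>s\<le>K. (\<Sum>j = 0..K. c j * G j s) = 0"
  shows "\<forall>j\<le>K. c j = 0"
  using zero
proof (induction K)
  case 0
  then show ?case using diagonal[of 0] by simp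
next
  case (Suc K)
  have "(\<Sum>j = 0..K. c j * G j (Suc K)) = 0"
    by (rule sum.neutral) (simp add: above_diagonal)
  then have cK: "c (Suc K) = 0"
    using Suc.prems diagonal[of "Suc K"] by auto
  then have "\<forall>s\<le>K. (\<Sum>j = 0..K. c j * G j s) = 0"
    using Suc.prems by simp
  then show ?case
    using Suc.IH cK le_Suc_eq by auto
qed

section \<open>q-commuting elements\<close>

lemma qcommute_power_right:
  fixes x y c :: "'a::ring_1"
  assumes xy: "x * y = c * (y * x)" and central: "\<And>u. c * u = u * c"
  shows "x * y ^ b = c ^ b * (y ^ b * x)"
proof (induction b)
  case (Suc b)
  have "x * y ^ Suc b = c * (y * (x * y ^ b))"
    by (simp add: mult.assoc[symmetric] xy)
  also have "\<dots> = c * (y * (c ^ b * (y ^ b * x)))"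
    by (simp add: Suc)
  also have "\<dots> = c ^ Suc b * (y ^ Suc b * x)"
    using power_commuting_commutes[OF central[of y], of b] by (metis mult.assoc power_Suc)
  finally show ?case .
qed simp

lemma qcommute_power_left:
  fixes x y c :: "'a::ring_1"
  assumes yx: "y * x = c * (x * y)" and central: "\<And>u. c * u = u * c"
  shows "y ^ b * x = c ^ b * (x * y ^ b)"
proof (induction b)
  case (Suc b)
  have "y ^ Suc b * x = y ^ b * (c * (x * y))"
    by (simp only: power_Suc2 mult.assoc yx)
  also have "\<dots> = c * ((y ^ b * x) * y)"
    by (metis central mult.assoc)
  also have "\<dots> = c ^ Suc b * (x * y ^ Suc b)"
    by (simp add: Suc mult.assoc power_commutes)
  finally show ?case .
qed simp

lemma qcommute_prod_list_right:
  fixes x c :: "'a::ring_1"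
  assumes xy: "\<And>i. i \<in> set xs \<Longrightarrow> x * y i = c * (y i * x)" and central: "\<And>u. c * u = u * c"
  shows "x * prod_list (map (\<lambda>i. y i ^ e i) xs) = c ^ sum_list (map e xs) * (prod_list (map (\<lambda>i. y i ^ e i) xs) * x)"
  using xy
proof (induction xs)
  case (Cons a xs)
  let ?P = "prod_list (map (\<lambda>i. y i ^ e i) xs)"
  have "x * (y a ^ e a * ?P) = c ^ e a * (y a ^ e a * (x * ?P))"
    using qcommute_power_right[OF Cons.prems[of a] central] by (simp add: mult.assoc[symmetric])
  also have "\<dots> = c ^ e a * (y a ^ e a * (c ^ sum_list (map e xs) * (?P * x)))"
    using Cons by simp
  also have "\<dots> = c ^ e a * (c ^ sum_list (map e xs) * (y a ^ e a * (?P * x)))"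
    by (subst mult.assoc[symmetric, of "y a ^ e a"])
      (simp only: power_commuting_commutes[of c "y a ^ e a", OF central, symmetric] mult.assoc)
  also have "\<dots> = c ^ (e a + sum_list (map e xs)) * (y a ^ e a * ?P * x)"
    by (simp add: power_add mult.assoc)
  finally show ?case
    by (simp add: mult.assoc)
qed simp

lemma qcommute_prod_list_left:
  fixes x c :: "'a::ring_1"
  assumes yx: "\<And>i. i \<in> set xs \<Longrightarrow> y i * x = c * (x * y i)" and central: "\<And>u. c * u = u * c"
  shows "prod_list (map (\<lambda>i. y i ^ e i) xs) * x = c ^ sum_list (map e xs) * (x * prod_list (map (\<lambda>i. y i ^ e i) xs))"
  using yx
proof (induction xs)
  case (Cons a xs)
  let ?P = "prod_list (map (\<lambda>i. y i ^ e i) xs)"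
  have "y a ^ e a * ?P * x = y a ^ e a * (c ^ sum_list (map e xs) * (x * ?P))"
    using Cons by (simp add: mult.assoc)
  also have "\<dots> = c ^ sum_list (map e xs) * ((y a ^ e a * x) * ?P)"
    using power_commuting_commutes[of c "y a ^ e a" "sum_list (map e xs)", OF central]
    by (simp add: mult.assoc[symmetric])
  also have "\<dots> = c ^ (sum_list (map e xs) + e a) * (x * (y a ^ e a * ?P))"
    using qcommute_power_left[OF Cons.prems[of a] central] by (simp add: power_add mult.assoc)
  finally show ?case
    by (simp add: add.commute)
qed simp

lemma upt_split_at:
  assumes "1 \<le> k" "k \<le> n"
  shows "[1..<Suc n] = [1..<k] @ k # [Suc k..<Suc n]"
  using assms upt_add_eq_append[of 1 k "Suc n - k"] by (simp add: upt_conv_Cons)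

lemma sum_split_at:
  fixes f :: "nat \<Rightarrow> 'c::comm_monoid_add"
  assumes "k \<in> {1..n}"
  shows "sum f {1..n} = sum f {1..<k} + f k + sum f {k<..n}"
proof -
  have split: "{1..n} = {1..<k} \<union> ({k} \<union> {k<..n})"
    using assms by auto
  have "sum f {1..n} = sum f {1..<k} + sum f ({k} \<union> {k<..n})"
    unfolding split by (rule sum.union_disjoint) auto
  also have "sum f ({k} \<union> {k<..n}) = f k + sum f {k<..n}"
    by (subst sum.union_disjoint) auto
  finally show ?thesis
    by (simp add: add.assoc)
qed

section \<open>Moving a unit between adjacent slots of a multi-index\<close>

lemma (in comm_monoid_set) update:
  assumes "finite A" "a \<in> A"
  shows "F (g(a := u)) A \<^bold>* g a = F g A \<^bold>* u"
proof -
  have "F (g(a := u)) (A - {a}) = F g (A - {a})"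
    by (rule cong) auto
  then show ?thesis
    using remove[OF assms, of g] remove[OF assms, of "g(a := u)"] by (simp add: ac_simps)
qed

lemma (in comm_monoid_set) update2:
  assumes "finite A" "a \<in> A" "b \<in> A" "a \<noteq> b"
  shows "F (g(a := u, b := v)) A \<^bold>* g a \<^bold>* g b = F g A \<^bold>* u \<^bold>* v"
  using update[OF assms(1,2), of g u] update[OF assms(1,3), of "g(a := u)" v] assms(4)
  by (metis assoc commute fun_upd_other)

definition shift_down :: "nat \<Rightarrow> (nat \<Rightarrow> nat) \<Rightarrow> nat \<Rightarrow> nat" where
  "shift_down k r = r(k := r k + 1, Suc k := r (Suc k) - 1)"

definition shift_up :: "nat \<Rightarrow> (nat \<Rightarrow> nat) \<Rightarrow> nat \<Rightarrow> nat" where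
  "shift_up k r = r(k := r k - 1, Suc k := r (Suc k) + 1)"

lemma shift_down_apply [simp]:
  "shift_down k r k = r k + 1" "shift_down k r (Suc k) = r (Suc k) - 1"
  "i \<noteq> k \<Longrightarrow> i \<noteq> Suc k \<Longrightarrow> shift_down k r i = r i"
  by (simp_all add: shift_down_def)

lemma shift_up_apply [simp]:
  "shift_up k r k = r k - 1" "shift_up k r (Suc k) = r (Suc k) + 1"
  "i \<noteq> k \<Longrightarrow> i \<noteq> Suc k \<Longrightarrow> shift_up k r i = r i"
  by (simp_all add: shift_up_def)

lemma shift_down_shift_up: "r k \<noteq> 0 \<Longrightarrow> shift_down k (shift_up k r) = r"
  by (auto simp: shift_down_def shift_up_def fun_eq_iff)

lemma shift_up_shift_down: "r (Suc k) \<noteq> 0 \<Longrightarrow> shift_up k (shift_down k r) = r"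
  by (auto simp: shift_down_def shift_up_def fun_eq_iff)

lemma sum_shift_down:
  "finite A \<Longrightarrow> k \<in> A \<Longrightarrow> Suc k \<in> A \<Longrightarrow> r (Suc k) \<noteq> 0 \<Longrightarrow> sum (shift_down k r) A = sum r A"
  using sum.update2[of A k "Suc k" r "r k + 1" "r (Suc k) - 1"] by (simp add: shift_down_def)

lemma sum_shift_up:
  "finite A \<Longrightarrow> k \<in> A \<Longrightarrow> Suc k \<in> A \<Longrightarrow> r k \<noteq> 0 \<Longrightarrow> sum (shift_up k r) A = sum r A"
  using sum_shift_down[of A k "shift_up k r"] by (simp add: shift_down_shift_up)

lemma mi_shift_down_iff:
  assumes "1 \<le> k" "Suc k \<le> n"
  shows "mi n (shift_down k r) \<longleftrightarrow> mi n r"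
proof -
  have "shift_down k r i = r i" if "i = 0 \<or> n < i" for i
    using that assms by (auto simp: shift_down_def)
  then show ?thesis
    unfolding mi_def by auto
qed

lemma mi_shift_up_iff:
  assumes "1 \<le> k" "Suc k \<le> n"
  shows "mi n (shift_up k r) \<longleftrightarrow> mi n r"
proof -
  have "shift_up k r i = r i" if "i = 0 \<or> n < i" for i
    using that assms by (auto simp: shift_up_def)
  then show ?thesis
    unfolding mi_def by auto
qed

lemma agree_shift_up_iff_shift_down_agree:
  assumes "k \<in> I" "Suc k \<in> I"
  shows "(\<forall>i\<in>I. r i = shift_up k s i) \<and> s k \<noteq> 0 \<longleftrightarrow> (\<forall>i\<in>I. shift_down k r i = s i) \<and> r (Suc k) \<noteq> 0"
proof
  assume agree: "(\<forall>i\<in>I. r i = shift_up k s i) \<and> s k \<noteq> 0"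
  then have "shift_down k r i = s i" if "i \<in> I" for i
    using that assms by (cases "i = k"; cases "i = Suc k") auto
  moreover have "r (Suc k) \<noteq> 0"
    using agree assms by auto
  ultimately show "(\<forall>i\<in>I. shift_down k r i = s i) \<and> r (Suc k) \<noteq> 0"
    by blast
next
  assume agree: "(\<forall>i\<in>I. shift_down k r i = s i) \<and> r (Suc k) \<noteq> 0"
  then have "r i = shift_up k s i" if "i \<in> I" for i
    using that assms by (cases "i = k"; cases "i = Suc k") auto
  moreover have "s k \<noteq> 0"
    using agree assms by (metis add_eq_0_iff_both_eq_0 one_neq_zero shift_down_apply(1))
  ultimately show "(\<forall>i\<in>I. r i = shift_up k s i) \<and> s k \<noteq> 0"
    by blast
qed

lemma deg_shift_down: "1 \<le> k \<Longrightarrow> Suc k \<le> n \<Longrightarrow> r (Suc k) \<noteq> 0 \<Longrightarrow> deg n (shift_down k r) = deg n r"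
  unfolding deg_def by (rule sum_shift_down) auto

lemma deg_shift_up: "1 \<le> k \<Longrightarrow> Suc k \<le> n \<Longrightarrow> r k \<noteq> 0 \<Longrightarrow> deg n (shift_up k r) = deg n r"
  unfolding deg_def by (rule sum_shift_up) auto

section \<open>Invariants in the algebra \<open>Z\<^sub>n\<close>\<close>

locale Zn_algebra =
  fixes n :: nat and q :: real and sc :: "complex \<Rightarrow> 'a::ring_1" and z w :: "nat \<Rightarrow> 'a"
  assumes q_pos: "0 < q" and q_less_1: "q < 1" and n_ge_2: "2 \<le> n"
    and Zn: "Zn_alg n q sc z w"
begin

abbreviation "crd \<equiv> coord n sc z w"
abbreviation "monom p \<equiv> Defs.mono z w n (fst p) (snd p)"

lemma sc_add [rule_format]: "\<forall>a b. sc (a + b) = sc a + sc b"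
  and sc_mult [rule_format]: "\<forall>a b. sc (a * b) = sc a * sc b"
  and sc_1 [simp]: "sc 1 = 1"
  and sc_central [rule_format]: "\<forall>a x. sc a * x = x * sc a"
  and z_z [rule_format]: "\<forall>i\<in>{1..n}. \<forall>j\<in>{1..n}. i < j \<longrightarrow> z i * z j = sc (of_real q) * z j * z i"
  and w_w [rule_format]: "\<forall>i\<in>{1..n}. \<forall>j\<in>{1..n}. i < j \<longrightarrow> w j * w i = sc (of_real q) * w i * w j"
  and w_z [rule_format]: "\<forall>i\<in>{1..n}. \<forall>j\<in>{1..n}. i \<noteq> j \<longrightarrow> w i * z j = sc (of_real q) * z j * w i"
  and w_z_same [rule_format]: "\<forall>i\<in>{1..n}.
         w i * z i = z i * w i + sc (of_real (1 - q\<^sup>2)) * (\<Sum>k\<in>{1..<i}. z k * w k)"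
  and pbw [rule_format]: "\<forall>x. \<exists>!c. good n c \<and> lincomb sc z w n c = x"
  by (insert Zn[unfolded Zn_alg_def]) (elim conjE, assumption)+

lemma sc_0 [simp]: "sc 0 = 0"
  using sc_add[of 0 0] by simp

lemma sc_sum: "sc (sum f A) = (\<Sum>x\<in>A. sc (f x))"
  by (induction A rule: infinite_finite_induct) (simp_all add: sc_add)

lemma sc_power: "sc (a ^ k) = sc a ^ k"
  by (induction k) (simp_all add: sc_mult)

lemma sc_mult_assoc: "sc a * (sc b * x) = sc (a * b) * x"
  by (simp add: sc_mult mult.assoc)

lemma mult_sc_commute: "x * (sc a * y) = sc a * (x * y)"
  by (metis mult.assoc sc_central)

lemma coord_eqI: "good n c \<Longrightarrow> lincomb sc z w n c = x \<Longrightarrow> crd x = c"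
  unfolding coord_def by (rule the1_equality[OF pbw]) simp

lemma coord_good: "good n (crd x)"
  and lincomb_coord: "lincomb sc z w n (crd x) = x"
  using theI'[OF pbw[of x]] unfolding coord_def by auto

lemma coord_inj: "crd x = crd y \<Longrightarrow> x = y"
  by (metis lincomb_coord)

lemma coord_nonzero_mi: "crd x p \<noteq> 0 \<Longrightarrow> mi n (fst p) \<and> mi n (snd p)"
  using coord_good[of x] unfolding good_def csupp_def by (cases p) auto

lemma finite_csupp_coord: "finite (csupp (crd x))"
  using coord_good[of x] by (simp add: good_def)

lemma lincomb_eq_sum:
  "finite F \<Longrightarrow> csupp c \<subseteq> F \<Longrightarrow> lincomb sc z w n c = (\<Sum>p\<in>F. sc (c p) * monom p)"
  unfolding lincomb_def by (rule sum.mono_neutral_left) (auto simp: csupp_def)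

lemma coord_sum_image:
  assumes fin: "finite S"
    and mi: "\<And>p. p \<in> S \<Longrightarrow> h p \<noteq> 0 \<Longrightarrow> mi n (fst (T p)) \<and> mi n (snd (T p))"
  shows "crd (\<Sum>p\<in>S. sc (h p) * monom (T p)) t = (\<Sum>p\<in>{p\<in>S. T p = t}. h p)"
proof -
  define g where "g t = (\<Sum>p\<in>{p\<in>S. T p = t}. h p)" for t
  have witness: "\<exists>p\<in>S. T p = t \<and> h p \<noteq> 0" if "t \<in> csupp g" for t
  proof (rule ccontr)
    assume "\<not> ?thesis"
    then have "g t = 0"
      unfolding g_def by (intro sum.neutral) auto
    with that show False
      by (simp add: csupp_def)
  qed
  then have supp: "csupp g \<subseteq> T ` S"
    by blast
  have "good n g"
    unfolding good_def using supp fin finite_subset witness mi by (metis finite_imageI prod.collapse)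
  moreover have "lincomb sc z w n g = (\<Sum>p\<in>S. sc (h p) * monom (T p))"
  proof -
    have "lincomb sc z w n g = (\<Sum>t\<in>T ` S. sc (g t) * monom t)"
      by (rule lincomb_eq_sum) (use supp fin in auto)
    also have "\<dots> = (\<Sum>t\<in>T ` S. \<Sum>p\<in>{p\<in>S. T p = t}. sc (h p) * monom (T p))"
      by (simp add: g_def sc_sum sum_distrib_right)
    also have "\<dots> = (\<Sum>p\<in>S. sc (h p) * monom (T p))"
      by (rule sum.image_gen[symmetric]) (rule fin)
    finally show ?thesis .
  qed
  ultimately show ?thesis
    using coord_eqI g_def by metis
qed

lemma coord_linear: "crd (sc a * x + sc b * y) p = a * crd x p + b * crd y p"
proof -
  define c where "c p = a * crd x p + b * crd y p" for p
  define F where "F = csupp (crd x) \<union> csupp (crd y)"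
  have fin: "finite F"
    using finite_csupp_coord by (simp add: F_def)
  have supp: "csupp c \<subseteq> F"
    by (auto simp: c_def F_def csupp_def)
  have "good n c"
    unfolding good_def
  proof
    show "finite (csupp c)"
      using finite_subset[OF supp fin] .
    show "\<forall>p\<in>csupp c. mi n (fst p) \<and> mi n (snd p)"
    proof
      fix p assume "p \<in> csupp c"
      then have "crd x p \<noteq> 0 \<or> crd y p \<noteq> 0"
        by (auto simp: c_def csupp_def)
      then show "mi n (fst p) \<and> mi n (snd p)"
        using coord_nonzero_mi by blast
    qed
  qed
  moreover have "lincomb sc z w n c = sc a * x + sc b * y"
  proof -
    have "lincomb sc z w n c = (\<Sum>p\<in>F. sc (c p) * monom p)"
      by (rule lincomb_eq_sum[OF fin supp])
    also have "\<dots> = sc a * (\<Sum>p\<in>F. sc (crd x p) * monom p) + sc b * (\<Sum>p\<in>F. sc (crd y p) * monom p)"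
      by (simp add: c_def sc_add sc_mult distrib_right sum.distrib sum_distrib_left mult.assoc)
    also have "\<dots> = sc a * x + sc b * y"
      using lincomb_eq_sum[OF fin, of "crd x"] lincomb_eq_sum[OF fin, of "crd y"]
      by (simp add: F_def lincomb_coord)
    finally show ?thesis .
  qed
  ultimately show ?thesis
    using coord_eqI c_def by metis
qed

lemma coord_zero: "crd 0 p = 0"
proof -
  have "crd 0 = (\<lambda>p. 0)"
    by (rule coord_eqI) (simp_all add: good_def lincomb_def csupp_def)
  then show ?thesis by simp
qed

lemma coord_add: "crd (x + y) p = crd x p + crd y p"
  using coord_linear[of 1 x 1 y] by simp

lemma coord_scale: "crd (sc a * x) p = a * crd x p"
  using coord_linear[of a x 0 0] by (simp add: coord_zero)

lemma coord_sum: "crd (\<Sum>j\<in>J. f j) p = (\<Sum>j\<in>J. crd (f j) p)"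
  by (induction J rule: infinite_finite_induct) (simp_all add: coord_zero coord_add)

lemma eq_0_iff_coord: "x = 0 \<longleftrightarrow> (\<forall>p. crd x p = 0)"
  using coord_inj[of x 0] coord_zero by (auto simp: fun_eq_iff)

lemma act_add:
  "act n sc z w (\<lambda>la mu. S la mu + T la mu) x = act n sc z w S x + act n sc z w T x"
  by (simp add: act_def distrib_left sum.distrib)

lemma coord_act_monomial_map:
  assumes T: "\<And>la mu. T la mu = (if P (la, mu) then sc (a (la, mu)) * monom (\<sigma> (la, mu)) else 0)"
    and mi: "\<And>p. mi n (fst p) \<Longrightarrow> mi n (snd p) \<Longrightarrow> P p \<Longrightarrow> mi n (fst (\<sigma> p)) \<and> mi n (snd (\<sigma> p))"
    and \<sigma>: "\<And>p. P p \<Longrightarrow> P' (\<sigma> p) \<and> \<tau> (\<sigma> p) = p"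
    and \<tau>: "\<And>t. P' t \<Longrightarrow> P (\<tau> t) \<and> \<sigma> (\<tau> t) = t"
  shows "crd (act n sc z w T x) t = (if P' t then crd x (\<tau> t) * a (\<tau> t) else 0)"
proof -
  define S where "S = csupp (crd x)"
  define h where "h p = (if P p then crd x p * a p else 0)" for p
  have fin: "finite S"
    by (simp add: S_def finite_csupp_coord)
  have mi_h: "mi n (fst (\<sigma> p)) \<and> mi n (snd (\<sigma> p))" if "p \<in> S" "h p \<noteq> 0" for p
    using that mi coord_nonzero_mi by (auto simp: S_def h_def csupp_def split: if_splits)
  have "act n sc z w T x = (\<Sum>p\<in>S. sc (h p) * monom (\<sigma> p))"
    unfolding act_def S_def by (intro sum.cong) (auto simp: T h_def sc_mult mult.assoc)
  then have "crd (act n sc z w T x) t = (\<Sum>p\<in>{p\<in>S. \<sigma> p = t}. h p)"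
    using coord_sum_image[OF fin mi_h] by simp
  also have "\<dots> = sum h (if P' t then {\<tau> t} else {})"
    by (rule sum.mono_neutral_cong) (use fin \<sigma> \<tau> in \<open>auto simp: h_def S_def csupp_def split: if_splits\<close>)
  finally show ?thesis
    by (simp add: h_def \<tau>)
qed

lemma coord_act_qe:
  "crd (act n sc z w (qe_mono n q sc z w i) x) t = crd x t * of_real (q powi (int (fst t i) - int (snd t i)))"
  by (rule trans[OF coord_act_monomial_map[where P = "\<lambda>_. True" and P' = "\<lambda>_. True"
        and \<sigma> = id and \<tau> = id and a = "\<lambda>p. of_real (q powi (int (fst p i) - int (snd p i)))"]])
    (simp_all add: qe_mono_def)

lemma coord_act_f:
  assumes k: "1 \<le> k" "Suc k \<le> n"
  shows "crd (act n sc z w (f_mono n q sc z w k) x) (r, s) =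
    (if s k = 0 then 0
     else - crd x (r, shift_up k s) * of_real (q ^ s k * qbr q (s (Suc k) + 1))) +
    (if r (Suc k) = 0 then 0
     else crd x (shift_down k r, s) *
       of_real (q powi (int (r (Suc k)) - 1 + int (s k) - int (s (Suc k))) * qbr q (r k + 1)))"
proof -
  let ?down = "\<lambda>la mu. if mu (Suc k) \<noteq> 0
    then sc (of_real (- (q ^ (mu k + 1) * qbr q (mu (Suc k))))) * Defs.mono z w n la (shift_down k mu)
    else 0"
  let ?up = "\<lambda>la mu. if la k \<noteq> 0
    then sc (of_real (q powi (int (la (Suc k)) + int (mu k) - int (mu (Suc k))) * qbr q (la k)))
      * Defs.mono z w n (shift_up k la) mu
    else 0"
  have f: "f_mono n q sc z w k = (\<lambda>la mu. ?down la mu + ?up la mu)"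
    by (intro ext) (simp add: f_mono_def shift_down_def shift_up_def fun_upd_twist)
  have down: "crd (act n sc z w ?down x) (r, s) = (if s k \<noteq> 0 then crd x (r, shift_up k s) *
      of_real (- (q ^ (shift_up k s k + 1) * qbr q (shift_up k s (Suc k)))) else 0)"
    by (rule trans[OF coord_act_monomial_map[where P = "\<lambda>p. snd p (Suc k) \<noteq> 0"
          and \<sigma> = "\<lambda>p. (fst p, shift_down k (snd p))" and P' = "\<lambda>t. snd t k \<noteq> 0"
          and \<tau> = "\<lambda>t. (fst t, shift_up k (snd t))"
          and a = "\<lambda>p. of_real (- (q ^ (snd p k + 1) * qbr q (snd p (Suc k))))"]])
      (use k in \<open>auto simp: mi_shift_down_iff shift_up_shift_down shift_down_shift_up\<close>)
  have up: "crd (act n sc z w ?up x) (r, s) = (if r (Suc k) \<noteq> 0 then crd x (shift_down k r, s) *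
      of_real (q powi (int (shift_down k r (Suc k)) + int (s k) - int (s (Suc k)))
        * qbr q (shift_down k r k)) else 0)"
    by (rule trans[OF coord_act_monomial_map[where P = "\<lambda>p. fst p k \<noteq> 0"
          and \<sigma> = "\<lambda>p. (shift_up k (fst p), snd p)" and P' = "\<lambda>t. fst t (Suc k) \<noteq> 0"
          and \<tau> = "\<lambda>t. (shift_down k (fst t), snd t)"
          and a = "\<lambda>p. of_real (q powi (int (fst p (Suc k)) + int (snd p k) - int (snd p (Suc k)))
            * qbr q (fst p k))"]])
      (use k in \<open>auto simp: mi_shift_up_iff shift_up_shift_down shift_down_shift_up\<close>)
  show ?thesis
    unfolding f act_add coord_add down up by (simp add: of_nat_diff)
qed

lemma coord_act_e:
  assumes k: "1 \<le> k" "Suc k \<le> n"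
  shows "crd (act n sc z w (e_mono n q sc z w k) x) (r, s) =
    (if s (Suc k) = 0 then 0
     else - crd x (r, shift_down k s) *
       of_real (inverse q * q powi (int (s (Suc k)) - 1 + int (r k) - int (r (Suc k))) * qbr q (s k + 1))) +
    (if r k = 0 then 0
     else crd x (shift_up k r, s) * of_real (q ^ (r k - 1) * qbr q (r (Suc k) + 1)))"
proof -
  let ?up = "\<lambda>la mu. if mu k \<noteq> 0
    then sc (of_real (- (inverse q * q powi (int (mu (Suc k)) + int (la k) - int (la (Suc k)))
      * qbr q (mu k)))) * Defs.mono z w n la (shift_up k mu)
    else 0"
  let ?down = "\<lambda>la mu. if la (Suc k) \<noteq> 0
    then sc (of_real (q ^ la k * qbr q (la (Suc k)))) * Defs.mono z w n (shift_down k la) mu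
    else 0"
  have e: "e_mono n q sc z w k = (\<lambda>la mu. ?up la mu + ?down la mu)"
    by (intro ext) (simp add: e_mono_def shift_down_def shift_up_def fun_upd_twist)
  have up: "crd (act n sc z w ?up x) (r, s) = (if s (Suc k) \<noteq> 0 then crd x (r, shift_down k s) *
      of_real (- (inverse q * q powi (int (shift_down k s (Suc k)) + int (r k) - int (r (Suc k)))
        * qbr q (shift_down k s k))) else 0)"
    by (rule trans[OF coord_act_monomial_map[where P = "\<lambda>p. snd p k \<noteq> 0"
          and \<sigma> = "\<lambda>p. (fst p, shift_up k (snd p))" and P' = "\<lambda>t. snd t (Suc k) \<noteq> 0"
          and \<tau> = "\<lambda>t. (fst t, shift_down k (snd t))"
          and a = "\<lambda>p. of_real (- (inverse q * q powi (int (snd p (Suc k)) + int (fst p k)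
            - int (fst p (Suc k))) * qbr q (snd p k)))"]])
      (use k in \<open>auto simp: mi_shift_up_iff shift_up_shift_down shift_down_shift_up\<close>)
  have down: "crd (act n sc z w ?down x) (r, s) = (if r k \<noteq> 0 then crd x (shift_up k r, s) *
      of_real (q ^ shift_up k r k * qbr q (shift_up k r (Suc k))) else 0)"
    by (rule trans[OF coord_act_monomial_map[where P = "\<lambda>p. fst p (Suc k) \<noteq> 0"
          and \<sigma> = "\<lambda>p. (shift_down k (fst p), snd p)" and P' = "\<lambda>t. fst t k \<noteq> 0"
          and \<tau> = "\<lambda>t. (shift_up k (fst t), snd t)"
          and a = "\<lambda>p. of_real (q ^ fst p k * qbr q (fst p (Suc k)))"]])
      (use k in \<open>auto simp: mi_shift_down_iff shift_up_shift_down shift_down_shift_up\<close>)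
  show ?thesis
    unfolding e act_add coord_add up down by (simp add: of_nat_diff)
qed

definition head_deg :: "(nat \<Rightarrow> nat) \<Rightarrow> nat" where
  "head_deg r = (\<Sum>i = 1..<n. r i)"

definition head_moment :: "(nat \<Rightarrow> nat) \<Rightarrow> nat" where
  "head_moment r = (\<Sum>i = 1..<n. (i - 1) * r i)"

definition head_qfact :: "(nat \<Rightarrow> nat) \<Rightarrow> real" where
  "head_qfact r = (\<Prod>i = 1..<n. qfact q (r i))"

lemma deg_eq_head_deg: "deg n r = head_deg r + r n"
  using n_ge_2 by (simp add: deg_def head_deg_def atLeastLessThanSuc_atLeastAtMost[symmetric])

lemma head_deg_cong: "\<forall>i\<in>{1..<n}. r i = s i \<Longrightarrow> head_deg r = head_deg s"
  unfolding head_deg_def by (rule sum.cong) auto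

lemma head_qfact_pos: "0 < head_qfact r"
  unfolding head_qfact_def by (rule prod_pos) (simp add: qfact_pos q_pos q_less_1)

lemma qbr_nonzero: "a \<noteq> 0 \<Longrightarrow> qbr q a \<noteq> 0"
  using qbr_pos[OF q_pos q_less_1] by (metis less_irrefl)

context
  fixes k assumes k: "1 \<le> k" "Suc k < n"
begin

lemma head_deg_shift_down: "r (Suc k) \<noteq> 0 \<Longrightarrow> head_deg (shift_down k r) = head_deg r"
  unfolding head_deg_def by (rule sum_shift_down) (use k in auto)

lemma head_deg_shift_up: "r k \<noteq> 0 \<Longrightarrow> head_deg (shift_up k r) = head_deg r"
  unfolding head_deg_def by (rule sum_shift_up) (use k in auto)

lemma head_moment_shift_down:
  assumes "r (Suc k) \<noteq> 0"
  shows "head_moment (shift_down k r) + 1 = head_moment r"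
proof -
  let ?f = "\<lambda>i. (i - 1) * r i"
  let ?g = "?f(k := (k - 1) * (r k + 1), Suc k := k * (r (Suc k) - 1))"
  have "head_moment (shift_down k r) = sum ?g {1..<n}"
    unfolding head_moment_def by (rule sum.cong) auto
  moreover have "sum ?g {1..<n} + ?f k + ?f (Suc k) = sum ?f {1..<n} + (k - 1) * (r k + 1) + k * (r (Suc k) - 1)"
    by (rule sum.update2) (use k in auto)
  moreover have "(Suc k - 1) * r (Suc k) = k * (r (Suc k) - 1) + k" "(k - 1) * (r k + 1) = (k - 1) * r k + (k - 1)"
    using assms by (simp_all add: diff_mult_distrib2)
  ultimately show ?thesis
    using k head_moment_def[of r] by linarith
qed

lemma head_qfact_shift_down:
  assumes "r (Suc k) \<noteq> 0"
  shows "head_qfact (shift_down k r) * qbr q (r (Suc k)) = head_qfact r * qbr q (r k + 1)"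
proof -
  let ?f = "\<lambda>i. qfact q (r i)"
  let ?g = "?f(k := qfact q (r k + 1), Suc k := qfact q (r (Suc k) - 1))"
  let ?a = "qfact q (r k)" and ?b = "qfact q (r (Suc k) - 1)"
  have "head_qfact (shift_down k r) = prod ?g {1..<n}"
    unfolding head_qfact_def by (rule prod.cong) auto
  moreover have "prod ?g {1..<n} * ?f k * ?f (Suc k) = head_qfact r * qfact q (r k + 1) * ?b"
    unfolding head_qfact_def by (rule prod.update2) (use k in auto)
  moreover have "?f (Suc k) = ?b * qbr q (r (Suc k))"
    using assms qfact_Suc[of q "r (Suc k) - 1"] by simp
  ultimately have "head_qfact (shift_down k r) * qbr q (r (Suc k)) * (?a * ?b)
      = head_qfact r * qbr q (r k + 1) * (?a * ?b)"
    by (simp add: qfact_Suc ac_simps)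
  moreover have "?a * ?b \<noteq> 0"
    using qfact_pos[OF q_pos q_less_1] by (metis mult_pos_pos less_irrefl)
  ultimately show ?thesis
    by simp
qed

end

definition corner :: "nat \<Rightarrow> nat \<Rightarrow> nat \<Rightarrow> nat" where
  "corner L s = (\<lambda>i. if i = 1 then s else if i = n then L - s else 0)"

lemma head_deg_corner [simp]: "head_deg (corner L s) = s"
proof -
  have "head_deg (corner L s) = corner L s 1 + (\<Sum>i\<in>{1..<n} - {1}. corner L s i)"
    unfolding head_deg_def using n_ge_2 by (subst sum.remove[of _ 1]) auto
  then show ?thesis
    by (simp add: corner_def)
qed

lemma mi_corner: "mi n (corner L s)"
  using n_ge_2 by (auto simp: mi_def corner_def)

lemma deg_corner: "s \<le> L \<Longrightarrow> deg n (corner L s) = L"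
  unfolding deg_eq_head_deg head_deg_corner using n_ge_2 by (simp add: corner_def)

lemma corner_eqI:
  assumes "mi n r" "\<forall>i\<in>{2..<n}. r i = 0"
  shows "r = corner (deg n r) (head_deg r)"
proof -
  have "head_deg r = r 1"
    using assms n_ge_2 unfolding head_deg_def
    by (subst sum.remove[of _ 1]) (auto intro!: sum.neutral)
  show ?thesis
  proof
    fix i
    consider "i = 1" | "i = n" | "i \<in> {2..<n}" | "i = 0 \<or> n < i"
      using n_ge_2 by fastforce
    then show "r i = corner (deg n r) (head_deg r) i"
      by cases (use assms n_ge_2 \<open>head_deg r = r 1\<close> in \<open>auto simp: corner_def mi_def deg_eq_head_deg\<close>)
  qed
qed

subsection \<open>Coefficient patterns of invariant elements\<close>

definition diag_indices :: "nat \<Rightarrow> nat \<Rightarrow> ((nat \<Rightarrow> nat) \<times> (nat \<Rightarrow> nat)) set" where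
  "diag_indices l m = {(la, mu). mi n la \<and> mi n mu \<and> (\<forall>i\<in>{1..<n}. la i = mu i)
      \<and> deg n la = l \<and> deg n mu = m}"

definition invariant_coord :: "nat \<Rightarrow> nat \<Rightarrow> (nat \<Rightarrow> complex) \<Rightarrow> (nat \<Rightarrow> nat) \<times> (nat \<Rightarrow> nat) \<Rightarrow> complex" where
  "invariant_coord l m g p =
     (if p \<in> diag_indices l m then g (head_deg (fst p)) / of_real (head_qfact (fst p)) else 0)"

lemma diag_indices_swap: "(la, mu) \<in> diag_indices l m \<longleftrightarrow> (mu, la) \<in> diag_indices m l"
  by (auto simp: diag_indices_def)

lemma shift_up_snd_mem_diag_indices_iff:
  assumes "1 \<le> k" "Suc k < n"
  shows "(r, shift_up k s) \<in> diag_indices l m \<and> s k \<noteq> 0 \<longleftrightarrow>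
    (shift_down k r, s) \<in> diag_indices l m \<and> r (Suc k) \<noteq> 0"
  using agree_shift_up_iff_shift_down_agree[of k "{1..<n}" r s] assms
  by (auto simp: diag_indices_def deg_shift_down deg_shift_up mi_shift_down_iff mi_shift_up_iff)

lemma shift_down_snd_mem_diag_indices_iff:
  assumes "1 \<le> k" "Suc k < n"
  shows "(r, shift_down k s) \<in> diag_indices l m \<and> s (Suc k) \<noteq> 0 \<longleftrightarrow>
    (shift_up k r, s) \<in> diag_indices l m \<and> r k \<noteq> 0"
  using shift_up_snd_mem_diag_indices_iff[OF assms, of s r m l] by (simp add: diag_indices_swap)

lemma invariant_coord_qe_fixed:
  assumes x: "crd x = invariant_coord l m g" and i: "i \<in> {1..<n}"
  shows "act n sc z w (qe_mono n q sc z w i) x = x"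
proof (rule coord_inj, rule ext)
  fix t
  show "crd (act n sc z w (qe_mono n q sc z w i) x) t = crd x t"
    using i by (cases "t \<in> diag_indices l m") (auto simp: coord_act_qe x invariant_coord_def diag_indices_def)
qed

lemma invariant_coord_f_zero:
  assumes x: "crd x = invariant_coord l m g" and k: "1 \<le> k" "Suc k < n"
  shows "act n sc z w (f_mono n q sc z w k) x = 0"
proof -
  have f: "crd (act n sc z w (f_mono n q sc z w k) x) (r, s) =
    (if s k = 0 then 0
     else - invariant_coord l m g (r, shift_up k s) * of_real (q ^ s k * qbr q (s (Suc k) + 1))) +
    (if r (Suc k) = 0 then 0
     else invariant_coord l m g (shift_down k r, s) *
       of_real (q powi (int (r (Suc k)) - 1 + int (s k) - int (s (Suc k))) * qbr q (r k + 1)))"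
    for r s using k by (simp add: coord_act_f x)
  have "crd (act n sc z w (f_mono n q sc z w k) x) (r, s) = 0" for r s
  proof (cases "(r, shift_up k s) \<in> diag_indices l m \<and> s k \<noteq> 0")
    case False
    then have "\<not> ((shift_down k r, s) \<in> diag_indices l m \<and> r (Suc k) \<noteq> 0)"
      using shift_up_snd_mem_diag_indices_iff[OF k] by blast
    with False show ?thesis
      unfolding f by (auto simp: invariant_coord_def)
  next
    case True
    then have D: "(r, shift_up k s) \<in> diag_indices l m" "s k \<noteq> 0"
      and D': "(shift_down k r, s) \<in> diag_indices l m" "r (Suc k) \<noteq> 0"
      using shift_up_snd_mem_diag_indices_iff[OF k] by blast+
    have rSk: "r (Suc k) = s (Suc k) + 1"
      using D(1) k by (auto simp: diag_indices_def)
    have W: "qbr q (r k + 1) / head_qfact (shift_down k r) = qbr q (r (Suc k)) / head_qfact r"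
      using head_qfact_shift_down[OF k, of r] D'(2) head_qfact_pos[of r] head_qfact_pos[of "shift_down k r"]
      by (simp add: field_simps)
    have "crd (act n sc z w (f_mono n q sc z w k) x) (r, s) = g (head_deg r) * of_real (q ^ s k) *
        of_real (qbr q (r k + 1) / head_qfact (shift_down k r) - qbr q (r (Suc k)) / head_qfact r)"
      unfolding f using D D' rSk by (simp add: invariant_coord_def head_deg_shift_down[OF k] field_simps)
    then show ?thesis
      unfolding W by simp
  qed
  then show ?thesis
    unfolding eq_0_iff_coord by simp
qed

lemma invariant_coord_e_zero:
  assumes x: "crd x = invariant_coord l m g" and k: "1 \<le> k" "Suc k < n"
  shows "act n sc z w (e_mono n q sc z w k) x = 0"
proof -
  have e: "crd (act n sc z w (e_mono n q sc z w k) x) (r, s) =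
    (if s (Suc k) = 0 then 0
     else - invariant_coord l m g (r, shift_down k s) *
       of_real (inverse q * q powi (int (s (Suc k)) - 1 + int (r k) - int (r (Suc k))) * qbr q (s k + 1))) +
    (if r k = 0 then 0
     else invariant_coord l m g (shift_up k r, s) * of_real (q ^ (r k - 1) * qbr q (r (Suc k) + 1)))"
    for r s using k by (simp add: coord_act_e x)
  have "crd (act n sc z w (e_mono n q sc z w k) x) (r, s) = 0" for r s
  proof (cases "(r, shift_down k s) \<in> diag_indices l m \<and> s (Suc k) \<noteq> 0")
    case False
    then have "\<not> ((shift_up k r, s) \<in> diag_indices l m \<and> r k \<noteq> 0)"
      using shift_down_snd_mem_diag_indices_iff[OF k] by blast
    with False show ?thesis
      unfolding e by (auto simp: invariant_coord_def)
  next
    case True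
    then have D: "(r, shift_down k s) \<in> diag_indices l m" "s (Suc k) \<noteq> 0"
      and D': "(shift_up k r, s) \<in> diag_indices l m" "r k \<noteq> 0"
      using shift_down_snd_mem_diag_indices_iff[OF k] by blast+
    have rk: "r k = s k + 1" and rSk: "r (Suc k) = s (Suc k) - 1"
      using D(1) k by (auto simp: diag_indices_def)
    have W: "qbr q (r (Suc k) + 1) / head_qfact (shift_up k r) = qbr q (r k) / head_qfact r"
      using head_qfact_shift_down[OF k, of "shift_up k r"] D'(2) shift_down_shift_up[of r k]
        head_qfact_pos[of r] head_qfact_pos[of "shift_up k r"]
      by (simp add: field_simps)
    have exponent: "int (s (Suc k)) - 1 + int (r k) - int (r (Suc k)) = int (r k)"
      using rSk D(2) by simp
    have inverse_q: "inverse q * q ^ r k = q ^ (r k - 1)"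
      using D'(2) q_pos by (cases "r k") auto
    have "crd (act n sc z w (e_mono n q sc z w k) x) (r, s) = g (head_deg r) * of_real (q ^ (r k - 1)) *
        of_real (qbr q (r (Suc k) + 1) / head_qfact (shift_up k r) - qbr q (r k) / head_qfact r)"
      unfolding e exponent power_int_of_nat inverse_q
      using D D' rk by (simp add: invariant_coord_def head_deg_shift_up[OF k] field_simps)
    then show ?thesis
      unfolding W by simp
  qed
  then show ?thesis
    unfolding eq_0_iff_coord by simp
qed

lemma Uinv_1_iff:
  "Uinv n q sc z w 1 x \<longleftrightarrow>
     (\<forall>i\<in>{1..<n}. act n sc z w (qe_mono n q sc z w i) x = x) \<and>
     (\<forall>k. 1 \<le> k \<and> Suc k < n \<longrightarrow>
        act n sc z w (e_mono n q sc z w k) x = 0 \<and> act n sc z w (f_mono n q sc z w k) x = 0)"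
proof -
  have "{1..n - 1} = {1..<n}" and "\<And>k. k \<in> {1..n - 1 - 1} \<longleftrightarrow> 1 \<le> k \<and> Suc k < n"
    using n_ge_2 by auto
  then show ?thesis
    unfolding Uinv_def Ball_def by blast
qed

lemma invariant_coord_imp_Uinv:
  assumes x: "crd x = invariant_coord l m g"
  shows "x \<in> Zlm n sc z w l m \<and> Uinv n q sc z w 1 x"
proof
  have "p \<in> diag_indices l m" if "crd x p \<noteq> 0" for p
    using that by (simp add: x invariant_coord_def split: if_splits)
  then show "x \<in> Zlm n sc z w l m"
    unfolding Zlm_def diag_indices_def by auto
  show "Uinv n q sc z w 1 x"
    unfolding Uinv_1_iff
    using invariant_coord_qe_fixed[OF x] invariant_coord_e_zero[OF x] invariant_coord_f_zero[OF x]
    by blast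
qed

lemma shift_down_mem_diag_indices:
  assumes "(r, s) \<in> diag_indices l m" and k: "1 \<le> k" "Suc k < n" and "r (Suc k) \<noteq> 0"
  shows "(shift_down k r, shift_down k s) \<in> diag_indices l m"
proof -
  have agree: "\<forall>i\<in>{1..<n}. r i = s i" and mi: "mi n r" "mi n s" and "deg n r = l" "deg n s = m"
    using assms(1) by (simp_all add: diag_indices_def)
  then have "s (Suc k) \<noteq> 0"
    using assms(4) k by simp
  moreover have "shift_down k r i = shift_down k s i" if "i \<in> {1..<n}" for i
    using agree that k by (cases "i = k"; cases "i = Suc k") auto
  ultimately show ?thesis
    using assms k agree mi \<open>deg n r = l\<close> \<open>deg n s = m\<close>
    by (simp add: diag_indices_def deg_shift_down mi_shift_down_iff)
qed

lemma diag_indices_eq_corner: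
  assumes D: "(r, s) \<in> diag_indices l m" and "head_moment r = 0"
  shows "r = corner l (head_deg r)" and "s = corner m (head_deg r)"
proof -
  have moment0: "\<forall>i\<in>{1..<n}. i \<le> 1 \<or> r i = 0"
    using assms(2) by (simp add: head_moment_def)
  have r0: "\<forall>i\<in>{2..<n}. r i = 0"
  proof
    fix i
    assume "i \<in> {2..<n}"
    then have "i \<in> {1..<n}" "\<not> i \<le> 1"
      by auto
    then show "r i = 0"
      using moment0 by blast
  qed
  moreover have "\<forall>i\<in>{1..<n}. r i = s i"
    using D by (simp add: diag_indices_def)
  ultimately have "\<forall>i\<in>{2..<n}. s i = 0" and "head_deg s = head_deg r"
    using head_deg_cong[of s r] by auto
  then show "r = corner l (head_deg r)" "s = corner m (head_deg r)"
    using corner_eqI[of r] corner_eqI[of s] r0 D by (simp_all add: diag_indices_def)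
qed

context
  fixes l m x
  assumes x_Zlm: "x \<in> Zlm n sc z w l m" and x_inv: "Uinv n q sc z w 1 x"
begin

lemma Uinv_coord_support:
  assumes nz: "crd x p \<noteq> 0"
  shows "p \<in> diag_indices l m"
proof -
  have "fst p i = snd p i" if i: "i \<in> {1..<n}" for i
  proof -
    have "act n sc z w (qe_mono n q sc z w i) x = x"
      using x_inv i unfolding Uinv_1_iff by blast
    then have "crd x p * of_real (q powi (int (fst p i) - int (snd p i))) = crd x p * 1"
      using coord_act_qe[of i x p] by simp
    then have "q powi (int (fst p i) - int (snd p i)) = 1"
      using nz by (metis mult_left_cancel of_real_eq_1_iff)
    then have "int (fst p i) - int (snd p i) = 0"
      by (rule power_int_eq_1_imp_eq_0[OF q_pos q_less_1])
    then show ?thesis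
      by simp
  qed
  then show ?thesis
    using nz x_Zlm coord_nonzero_mi[OF nz] by (cases p) (auto simp: diag_indices_def Zlm_def)
qed

lemma Uinv_coord_shift_down:
  assumes D: "(r, s) \<in> diag_indices l m" and k: "1 \<le> k" "Suc k < n" and r0: "r (Suc k) \<noteq> 0"
  shows "crd x (shift_down k r, shift_down k s) * of_real (head_qfact (shift_down k r))
    = crd x (r, s) * of_real (head_qfact r)"
proof -
  have rk: "r k = s k" and rSk: "r (Suc k) = s (Suc k)"
    using D k by (auto simp: diag_indices_def)
  have "int (r (Suc k)) - 1 + int (shift_down k s k) - int (shift_down k s (Suc k)) = int (s k + 1)"
    using r0 rSk by simp
  then have exponent: "q powi (int (r (Suc k)) - 1 + int (shift_down k s k) - int (shift_down k s (Suc k)))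
      = q ^ (s k + 1)"
    by (simp only: power_int_of_nat)
  have "crd (act n sc z w (f_mono n q sc z w k) x) (r, shift_down k s) = of_real (q ^ (s k + 1)) *
      (crd x (shift_down k r, shift_down k s) * of_real (qbr q (s k + 1)) - crd x (r, s) * of_real (qbr q (s (Suc k))))"
    unfolding coord_act_f[OF k(1) less_imp_le[OF k(2)]] exponent
    using r0 rk rSk by (simp add: shift_up_shift_down algebra_simps)
  moreover have "act n sc z w (f_mono n q sc z w k) x = 0"
    using x_inv k unfolding Uinv_1_iff by blast
  ultimately have recurrence: "crd x (r, s) * of_real (qbr q (s (Suc k)))
      = crd x (shift_down k r, shift_down k s) * of_real (qbr q (s k + 1))"
    using q_pos by (simp add: coord_zero)
  let ?c = "crd x (r, s)" and ?c' = "crd x (shift_down k r, shift_down k s)"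
  let ?W = "of_real (head_qfact r) :: complex" and ?W' = "of_real (head_qfact (shift_down k r)) :: complex"
  let ?b = "of_real (qbr q (s (Suc k))) :: complex" and ?d = "of_real (qbr q (s k + 1)) :: complex"
  have weights: "?W' * ?b = ?W * ?d"
    using head_qfact_shift_down[OF k, of r] r0 rk rSk by (metis of_real_mult)
  have "?c' * ?W' * ?b = ?c' * (?W' * ?b)"
    by (simp only: mult.assoc)
  also have "\<dots> = (?c' * ?d) * ?W"
    unfolding weights by (simp only: ac_simps)
  also have "\<dots> = ?c * ?W * ?b"
    unfolding recurrence[symmetric] by (simp only: ac_simps)
  finally show ?thesis
    using qbr_nonzero r0 rSk by simp
qed

lemma Uinv_coord_eq_corner:
  assumes "(r, s) \<in> diag_indices l m"
  shows "crd x (r, s) * of_real (head_qfact r) =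
    crd x (corner l (head_deg r), corner m (head_deg r)) * of_real (head_qfact (corner l (head_deg r)))"
  using assms
proof (induction "head_moment r" arbitrary: r s rule: less_induct)
  case less
  show ?case
  proof (cases "head_moment r = 0")
    case True
    then show ?thesis
      using diag_indices_eq_corner[OF less.prems] by (simp only: eq_commute[of r] eq_commute[of s])
  next
    case False
    then obtain i where i: "i \<in> {1..<n}" "(i - 1) * r i \<noteq> 0"
      unfolding head_moment_def by (meson sum.neutral)
    define k where "k = i - 1"
    have k: "1 \<le> k" "Suc k < n" and r0: "r (Suc k) \<noteq> 0"
      using i by (auto simp: k_def)
    have "head_moment (shift_down k r) < head_moment r"
      using head_moment_shift_down[OF k, of r] r0 by simp
    then have "crd x (shift_down k r, shift_down k s) * of_real (head_qfact (shift_down k r)) =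
        crd x (corner l (head_deg r), corner m (head_deg r)) * of_real (head_qfact (corner l (head_deg r)))"
      using less.hyps shift_down_mem_diag_indices[OF less.prems k r0] head_deg_shift_down[OF k, of r] r0
      by metis
    then show ?thesis
      using Uinv_coord_shift_down[OF less.prems k r0] by simp
  qed
qed

lemma Uinv_imp_invariant_coord: "\<exists>g. crd x = invariant_coord l m g"
proof
  define g where "g h = crd x (corner l h, corner m h) * of_real (head_qfact (corner l h))" for h
  show "crd x = invariant_coord l m g"
  proof
    fix p :: "(nat \<Rightarrow> nat) \<times> (nat \<Rightarrow> nat)"
    show "crd x p = invariant_coord l m g p"
    proof (cases "p \<in> diag_indices l m")
      case True
      then have "crd x p * of_real (head_qfact (fst p)) = g (head_deg (fst p))"
        using Uinv_coord_eq_corner[of "fst p" "snd p"] by (simp add: g_def)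
      then show ?thesis
        using True head_qfact_pos[of "fst p"] by (simp add: invariant_coord_def eq_divide_eq)
    next
      case False
      then show ?thesis
        using Uinv_coord_support[of p] by (auto simp: invariant_coord_def)
    qed
  qed
qed

end

subsection \<open>Commutation with monomials\<close>

lemma sc_inverse_q_mult: "sc (of_real (inverse q)) * (sc (of_real q) * u) = u"
  using q_pos by (simp add: sc_mult_assoc flip: of_real_mult)

lemma z_z_swap: "i \<in> {1..n} \<Longrightarrow> k \<in> {1..n} \<Longrightarrow> i < k \<Longrightarrow> z k * z i = sc (of_real (inverse q)) * (z i * z k)"
  using sc_inverse_q_mult[of "z k * z i"] by (simp add: z_z mult.assoc)

lemma w_w_swap: "i \<in> {1..n} \<Longrightarrow> k \<in> {1..n} \<Longrightarrow> i < k \<Longrightarrow> w i * w k = sc (of_real (inverse q)) * (w k * w i)"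
  using sc_inverse_q_mult[of "w i * w k"] by (simp add: w_w mult.assoc)

lemma z_mul_mono:
  assumes k: "k \<in> {1..n}"
  shows "z k * Defs.mono z w n la mu
    = sc (of_real (inverse q ^ (\<Sum>i = 1..<k. la i))) * Defs.mono z w n (la(k := la k + 1)) mu"
proof -
  let ?Z = "\<lambda>la xs. prod_list (map (\<lambda>i. z i ^ la i) xs)"
  let ?c = "sc (of_real (inverse q ^ (\<Sum>i = 1..<k. la i)))"
  have split: "[1..<Suc n] = [1..<k] @ k # [Suc k..<Suc n]"
    using k by (intro upt_split_at) auto
  have low: "?Z (la(k := la k + 1)) [1..<k] = ?Z la [1..<k]"
    and high: "?Z (la(k := la k + 1)) [Suc k..<Suc n] = ?Z la [Suc k..<Suc n]"
    by (intro arg_cong[where f = prod_list] map_cong; auto)+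
  have "z k * ?Z la [1..<k] = ?c * (?Z la [1..<k] * z k)"
    using qcommute_prod_list_right[where x = "z k" and c = "sc (of_real (inverse q))" and xs = "[1..<k]"
      and y = z and e = la, OF _ sc_central] k
    by (simp add: z_z_swap sum_set_upt_conv_sum_list_nat[symmetric] flip: sc_power)
  then have "z k * ?Z la [1..<Suc n] = ?c * (?Z la [1..<k] * (z k * z k ^ la k) * ?Z la [Suc k..<Suc n])"
    unfolding split by (simp add: mult.assoc[symmetric])
  also have "\<dots> = ?c * ?Z (la(k := la k + 1)) [1..<Suc n]"
    unfolding split by (simp only: map_append list.map prod_list.append prod_list.Cons low high)
      (simp add: mult.assoc)
  finally show ?thesis
    unfolding mono_def by (simp add: mult.assoc[symmetric])
qed

lemma mono_mul_w:
  assumes k: "k \<in> {1..n}"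
  shows "Defs.mono z w n la mu * w k
    = sc (of_real (inverse q ^ (\<Sum>i = 1..<k. mu i))) * Defs.mono z w n la (mu(k := mu k + 1))"
proof -
  let ?W = "\<lambda>mu xs. prod_list (map (\<lambda>i. w i ^ mu i) xs)"
  let ?c = "sc (of_real (inverse q ^ (\<Sum>i = 1..<k. mu i)))"
  have split: "rev [1..<Suc n] = rev [Suc k..<Suc n] @ k # rev [1..<k]"
    using k upt_split_at[of k n] by simp
  have low: "?W (mu(k := mu k + 1)) (rev [1..<k]) = ?W mu (rev [1..<k])"
    and high: "?W (mu(k := mu k + 1)) (rev [Suc k..<Suc n]) = ?W mu (rev [Suc k..<Suc n])"
    by (intro arg_cong[where f = prod_list] map_cong; auto)+
  have "?W mu (rev [1..<k]) * w k = ?c * (w k * ?W mu (rev [1..<k]))"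
    using qcommute_prod_list_left[where x = "w k" and c = "sc (of_real (inverse q))" and xs = "rev [1..<k]"
      and y = w and e = mu, OF _ sc_central] k
    by (simp add: w_w_swap rev_map[symmetric] sum_set_upt_conv_sum_list_nat[symmetric] flip: sc_power)
  then have "?W mu (rev [1..<Suc n]) * w k = ?W mu (rev [Suc k..<Suc n]) * w k ^ mu k * (?c * (w k * ?W mu (rev [1..<k])))"
    unfolding split by (simp add: mult.assoc)
  also have "\<dots> = ?c * (?W mu (rev [Suc k..<Suc n]) * (w k ^ mu k * w k) * ?W mu (rev [1..<k]))"
    by (simp add: mult_sc_commute mult.assoc)
  also have "\<dots> = ?c * ?W (mu(k := mu k + 1)) (rev [1..<Suc n])"
    unfolding split by (simp only: map_append list.map prod_list.append prod_list.Cons low high)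
      (simp add: mult.assoc power_commutes)
  finally show ?thesis
    unfolding mono_def by (simp add: mult.assoc mult_sc_commute)
qed

lemma Q_mul_z:
  assumes k: "k \<in> {1..n}"
  shows "Q z w n * z k = z k * Q z w n"
proof -
  define T where "T i = z k * (z i * w i)" for i
  define c where "c = sc (of_real (1 - q\<^sup>2))"
  have below: "z i * w i * z k = sc (of_real (q ^ 2)) * T i" if "i \<in> {1..<k}" for i
  proof -
    have i: "i \<in> {1..n}" "i \<noteq> k" "i < k"
      using that k by auto
    have "z i * w i * z k = sc (of_real q) * (z i * z k * w i)"
      by (simp only: mult.assoc w_z[OF i(1) k i(2)] mult_sc_commute)
    also have "\<dots> = sc (of_real q) * (sc (of_real q) * T i)"
      by (simp only: z_z[OF i(1) k i(3)] T_def mult.assoc)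
    finally show ?thesis
      by (simp add: sc_mult_assoc power2_eq_square)
  qed
  have above: "z i * w i * z k = T i" if "i \<in> {k<..n}" for i
  proof -
    have i: "i \<in> {1..n}" "i \<noteq> k" "k < i"
      using that k by auto
    have "z i * w i * z k = sc (of_real q) * z i * z k * w i"
      by (simp only: mult.assoc w_z[OF i(1) k i(2)] mult_sc_commute)
    also have "\<dots> = T i"
      by (simp only: T_def mult.assoc[symmetric] z_z[OF k i(1) i(3)])
    finally show ?thesis .
  qed
  have diagonal: "z k * w k * z k = T k + c * (\<Sum>i = 1..<k. T i)"
    by (simp only: mult.assoc w_z_same[OF k] distrib_left mult_sc_commute sum_distrib_left T_def c_def)
  have "Q z w n * z k = (\<Sum>i = 1..n. z i * w i * z k)"
    by (simp add: Q_def sum_distrib_right)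
  also have "\<dots> = (\<Sum>i = 1..<k. sc (of_real (q ^ 2)) * T i) + (T k + c * (\<Sum>i = 1..<k. T i))
      + (\<Sum>i\<in>{k<..n}. T i)"
    unfolding sum_split_at[OF k] diagonal using below above by simp
  also have "\<dots> = (sc (of_real (q ^ 2)) + c) * (\<Sum>i = 1..<k. T i) + T k + (\<Sum>i\<in>{k<..n}. T i)"
    by (simp add: distrib_right sum_distrib_left sum.distrib add_ac)
  also have "sc (of_real (q ^ 2)) + c = 1"
    by (simp add: c_def flip: sc_add)
  also have "1 * (\<Sum>i = 1..<k. T i) + T k + (\<Sum>i\<in>{k<..n}. T i) = z k * Q z w n"
    unfolding mult_1 sum_split_at[OF k, of T, symmetric] by (simp add: T_def Q_def sum_distrib_left)
  finally show ?thesis .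
qed

lemma w_n_mul_Q: "w n * Q z w n = Q z w n * w n"
proof -
  have n: "n \<in> {1..n}"
    using n_ge_2 by auto
  define U where "U i = z i * w i * w n" for i
  define c where "c = sc (of_real (1 - q\<^sup>2))"
  have below: "w n * (z i * w i) = sc (of_real (q ^ 2)) * U i" if "i \<in> {1..<n}" for i
  proof -
    have i: "i \<in> {1..n}" "n \<noteq> i" "i < n"
      using that by auto
    have inner: "z i * (w n * w i) = sc (of_real q) * U i"
      by (simp only: w_w[OF i(1) n i(3)] U_def mult.assoc mult_sc_commute)
    have "w n * (z i * w i) = sc (of_real q) * (z i * (w n * w i))"
      by (simp only: mult.assoc[symmetric] w_z[OF n i(1) i(2)])
    then show ?thesis
      unfolding inner by (simp add: sc_mult_assoc power2_eq_square)
  qed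
  have diagonal: "w n * (z n * w n) = U n + c * (\<Sum>i = 1..<n. U i)"
    by (simp only: mult.assoc[symmetric] w_z_same[OF n] distrib_right U_def c_def)
      (simp only: mult.assoc sum_distrib_right)
  have split: "{1..n} = insert n {1..<n}"
    using n_ge_2 by auto
  have "w n * Q z w n = (\<Sum>i = 1..<n. w n * (z i * w i)) + w n * (z n * w n)"
    unfolding Q_def split by (simp add: sum_distrib_left distrib_left add.commute)
  also have "\<dots> = (\<Sum>i = 1..<n. sc (of_real (q ^ 2)) * U i) + (U n + c * (\<Sum>i = 1..<n. U i))"
    unfolding diagonal using below by simp
  also have "\<dots> = (sc (of_real (q ^ 2)) + c) * (\<Sum>i = 1..<n. U i) + U n"
    by (simp add: distrib_right sum_distrib_left sum.distrib add_ac)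
  also have "sc (of_real (q ^ 2)) + c = 1"
    by (simp add: c_def flip: sc_add)
  also have "1 * (\<Sum>i = 1..<n. U i) + U n = Q z w n * w n"
    unfolding Q_def split by (simp add: U_def sum_distrib_right distrib_right add.commute)
  finally show ?thesis .
qed

lemma Q_power_mul_z: "k \<in> {1..n} \<Longrightarrow> Q z w n ^ j * z k = z k * Q z w n ^ j"
  using power_commuting_commutes Q_mul_z by blast

lemma w_n_power_mul_Q_power: "w n ^ b * Q z w n ^ j = Q z w n ^ j * w n ^ b"
  using power_commuting_commutes[of "w n" "Q z w n ^ j" b] power_commuting_commutes[OF w_n_mul_Q[symmetric], of j]
  by simp

subsection \<open>The q-multinomial expansion of powers of \<open>Q\<^sub>n\<close>\<close>

definition multi_indices :: "nat \<Rightarrow> (nat \<Rightarrow> nat) set" where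
  "multi_indices j = {la. mi n la \<and> deg n la = j}"

definition qmultinom :: "(nat \<Rightarrow> nat) \<Rightarrow> real" where
  "qmultinom la = qfact q (deg n la) / (\<Prod>i = 1..n. qfact q (la i))"

lemma finite_multi_indices: "finite (multi_indices j)"
proof (rule finite_subset)
  show "multi_indices j \<subseteq> {f. \<forall>x. (x \<in> {1..n} \<longrightarrow> f x \<in> {0..j}) \<and> (x \<notin> {1..n} \<longrightarrow> f x = 0)}"
  proof (clarify, intro conjI impI)
    fix f x
    assume f: "f \<in> multi_indices j"
    show "f x = 0" if "x \<notin> {1..n}"
    proof -
      have "x = 0 \<or> n < x"
        using that by auto
      then show ?thesis
        using f by (auto simp: multi_indices_def mi_def)
    qed
    show "f x \<in> {0..j}" if "x \<in> {1..n}"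
      using f member_le_sum[OF that, of f] by (auto simp: multi_indices_def deg_def)
  qed
qed (rule finite_set_of_finite_funs; simp)

lemma multi_indices_0: "multi_indices 0 = {\<lambda>i. 0}"
proof -
  have "la = (\<lambda>i. 0)" if "la \<in> multi_indices 0" for la
  proof
    fix i
    have "mi n la" "\<forall>i\<in>{1..n}. la i = 0"
      using that by (simp_all add: multi_indices_def deg_def)
    then show "la i = 0"
      unfolding mi_def by (cases "i = 0 \<or> n < i") auto
  qed
  then show ?thesis
    by (auto simp: multi_indices_def mi_def deg_def)
qed

lemma multi_indices_increment:
  "la \<in> multi_indices j \<Longrightarrow> k \<in> {1..n} \<Longrightarrow> la(k := la k + 1) \<in> multi_indices (Suc j)"
  using sum.update[of "{1..n}" k la "la k + 1"] by (auto simp: multi_indices_def mi_def deg_def)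

lemma multi_indices_decrement:
  "nu \<in> multi_indices (Suc j) \<Longrightarrow> k \<in> {1..n} \<Longrightarrow> nu k \<noteq> 0 \<Longrightarrow> nu(k := nu k - 1) \<in> multi_indices j"
  using sum.update[of "{1..n}" k nu "nu k - 1"] by (auto simp: multi_indices_def mi_def deg_def)

lemma qmultinom_decrement:
  assumes nu: "nu \<in> multi_indices (Suc j)" and k: "k \<in> {1..n}" and nk: "nu k \<noteq> 0"
  shows "qmultinom (nu(k := nu k - 1)) = qfact q j * qbr q (nu k) / (\<Prod>i = 1..n. qfact q (nu i))"
proof -
  let ?P = "\<lambda>la. \<Prod>i = 1..n. qfact q (la i)"
  have "?P (nu(k := nu k - 1)) * qfact q (nu k) = ?P nu * qfact q (nu k - 1)"
    using prod.update[of "{1..n}" k "\<lambda>i. qfact q (nu i)" "qfact q (nu k - 1)"] k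
    by (simp add: fun_upd_def if_distrib cong: if_cong)
  moreover have "qfact q (nu k) = qfact q (nu k - 1) * qbr q (nu k)"
    using nk qfact_Suc[of q "nu k - 1"] by simp
  moreover have "qfact q (nu k - 1) \<noteq> 0"
    using qfact_pos[OF q_pos q_less_1] by (metis less_irrefl)
  ultimately have P: "?P (nu(k := nu k - 1)) * qbr q (nu k) = ?P nu"
    by (simp add: algebra_simps)
  have "deg n (nu(k := nu k - 1)) = j"
    using multi_indices_decrement[OF assms] by (simp add: multi_indices_def)
  then show ?thesis
    unfolding qmultinom_def P[symmetric] using qbr_nonzero[OF nk] by simp
qed

lemma qmultinom_rec:
  assumes nu: "nu \<in> multi_indices (Suc j)"
  shows "(\<Sum>k\<in>{k\<in>{1..n}. nu k \<noteq> 0}. qmultinom (nu(k := nu k - 1)) * (inverse q ^ 2) ^ (\<Sum>i = 1..<k. nu i))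
    = qmultinom nu"
proof -
  let ?P = "\<Prod>i = 1..n. qfact q (nu i)"
  let ?t = "\<lambda>k. qbr q (nu k) * (inverse q ^ 2) ^ (\<Sum>i = 1..<k. nu i)"
  have "(\<Sum>k\<in>{k\<in>{1..n}. nu k \<noteq> 0}. qmultinom (nu(k := nu k - 1)) * (inverse q ^ 2) ^ (\<Sum>i = 1..<k. nu i))
      = (\<Sum>k\<in>{k\<in>{1..n}. nu k \<noteq> 0}. qfact q j / ?P * ?t k)"
  proof (rule sum.cong)
    fix k
    assume "k \<in> {k\<in>{1..n}. nu k \<noteq> 0}"
    then show "qmultinom (nu(k := nu k - 1)) * (inverse q ^ 2) ^ (\<Sum>i = 1..<k. nu i) = qfact q j / ?P * ?t k"
      using qmultinom_decrement[OF nu, of k] by simp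
  qed simp
  also have "\<dots> = qfact q j / ?P * (\<Sum>k\<in>{k\<in>{1..n}. nu k \<noteq> 0}. ?t k)"
    by (simp add: sum_distrib_left)
  also have "(\<Sum>k\<in>{k\<in>{1..n}. nu k \<noteq> 0}. ?t k) = (\<Sum>k = 1..n. ?t k)"
    by (rule sum.mono_neutral_left) auto
  also have "\<dots> = qbr q (Suc j)"
    using qbr_sum[OF q_pos, where N = n and f = nu] nu by (simp add: multi_indices_def deg_def)
  also have "qfact q j / ?P * qbr q (Suc j) = qmultinom nu"
    using nu by (simp add: qmultinom_def multi_indices_def qfact_Suc)
  finally show ?thesis .
qed

lemma z_mul_mono_mul_w:
  assumes k: "k \<in> {1..n}"
  shows "z k * Defs.mono z w n la la * w k
    = sc (of_real ((inverse q ^ 2) ^ (\<Sum>i = 1..<k. la i))) * Defs.mono z w n (la(k := la k + 1)) (la(k := la k + 1))"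
proof -
  let ?a = "inverse q ^ (\<Sum>i = 1..<k. la i)"
  have "z k * Defs.mono z w n la la * w k = sc (of_real ?a) * (Defs.mono z w n (la(k := la k + 1)) la * w k)"
    by (simp only: z_mul_mono[OF k] mult.assoc)
  also have "\<dots> = sc (of_real ?a) * (sc (of_real ?a) * Defs.mono z w n (la(k := la k + 1)) (la(k := la k + 1)))"
    by (simp only: mono_mul_w[OF k])
  also have "\<dots> = sc (of_real ((inverse q ^ 2) ^ (\<Sum>i = 1..<k. la i))) * Defs.mono z w n (la(k := la k + 1)) (la(k := la k + 1))"
    by (simp only: sc_mult_assoc of_real_mult[symmetric] power2_eq_square power_mult_distrib)
  finally show ?thesis .
qed

lemma Q_power_Suc_expansion:
  assumes IH: "Q z w n ^ j = (\<Sum>la\<in>multi_indices j. sc (of_real (qmultinom la)) * Defs.mono z w n la la)"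
  shows "Q z w n ^ Suc j = (\<Sum>(k, la)\<in>{1..n} \<times> multi_indices j.
      sc (of_real (qmultinom la * (inverse q ^ 2) ^ (\<Sum>i = 1..<k. la i)))
        * Defs.mono z w n (la(k := la k + 1)) (la(k := la k + 1)))"
proof -
  have "Q z w n ^ Suc j = (\<Sum>k = 1..n. Q z w n ^ j * z k * w k)"
    by (simp only: power_Suc2 Q_def sum_distrib_left mult.assoc)
  also have "\<dots> = (\<Sum>k = 1..n. z k * Q z w n ^ j * w k)"
    by (rule sum.cong) (simp_all add: Q_power_mul_z)
  also have "\<dots> = (\<Sum>k = 1..n. \<Sum>la\<in>multi_indices j. sc (of_real (qmultinom la)) * (z k * Defs.mono z w n la la * w k))"
    unfolding IH sum_distrib_left sum_distrib_right by (simp only: mult.assoc mult_sc_commute)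
  also have "\<dots> = (\<Sum>k = 1..n. \<Sum>la\<in>multi_indices j.
      sc (of_real (qmultinom la * (inverse q ^ 2) ^ (\<Sum>i = 1..<k. la i)))
        * Defs.mono z w n (la(k := la k + 1)) (la(k := la k + 1)))"
    by (intro sum.cong refl) (simp add: z_mul_mono_mul_w sc_mult_assoc)
  finally show ?thesis
    by (simp add: sum.cartesian_product)
qed

lemma Q_power_expansion:
  "Q z w n ^ j = (\<Sum>la\<in>multi_indices j. sc (of_real (qmultinom la)) * Defs.mono z w n la la)"
proof (induction j)
  case 0
  have "qmultinom (\<lambda>i. 0) = 1"
    by (simp add: qmultinom_def deg_def)
  then show ?case
    by (simp add: multi_indices_0 mono_def map_replicate_const)
next
  case (Suc j)
  let ?h = "\<lambda>k la. qmultinom la * (inverse q ^ 2) ^ (\<Sum>i = 1..<k. la i)"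
  let ?K = "\<lambda>nu. {k\<in>{1..n}. nu k \<noteq> 0}"
  have "Q z w n ^ Suc j = (\<Sum>(nu, k)\<in>Sigma (multi_indices (Suc j)) ?K.
      sc (of_real (?h k (nu(k := nu k - 1)))) * Defs.mono z w n nu nu)"
    unfolding Q_power_Suc_expansion[OF Suc.IH]
    by (rule sum.reindex_bij_witness[where i = "\<lambda>(nu, k). (k, nu(k := nu k - 1))"
          and j = "\<lambda>(k, la). (la(k := la k + 1), k)"])
      (auto intro: multi_indices_increment[simplified] multi_indices_decrement[simplified])
  also have "\<dots> = (\<Sum>nu\<in>multi_indices (Suc j). sc (of_real (\<Sum>k\<in>?K nu. ?h k (nu(k := nu k - 1))))
      * Defs.mono z w n nu nu)"
    by (simp add: sum.Sigma[symmetric] finite_multi_indices sc_sum sum_distrib_right)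
  also have "\<dots> = (\<Sum>nu\<in>multi_indices (Suc j). sc (of_real (qmultinom nu)) * Defs.mono z w n nu nu)"
  proof (intro sum.cong refl)
    fix nu
    assume nu: "nu \<in> multi_indices (Suc j)"
    have "(\<Sum>i = 1..<k. (nu(k := nu k - 1)) i) = (\<Sum>i = 1..<k. nu i)" for k
      by (rule sum.cong) auto
    then show "sc (of_real (\<Sum>k\<in>?K nu. ?h k (nu(k := nu k - 1)))) * Defs.mono z w n nu nu
        = sc (of_real (qmultinom nu)) * Defs.mono z w n nu nu"
      using qmultinom_rec[OF nu] by simp
  qed
  finally show ?case .
qed

lemma head_deg_upd_n [simp]: "head_deg (r(n := v)) = head_deg r"
  unfolding head_deg_def by (rule sum.cong) auto

lemma z_n_mul_mono:
  "z n * Defs.mono z w n la mu = sc (of_real (inverse q ^ head_deg la)) * Defs.mono z w n (la(n := la n + 1)) mu"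
  using z_mul_mono[of n] n_ge_2 by (simp add: head_deg_def)

lemma mono_mul_w_n:
  "Defs.mono z w n la mu * w n = sc (of_real (inverse q ^ head_deg mu)) * Defs.mono z w n la (mu(n := mu n + 1))"
  using mono_mul_w[of n] n_ge_2 by (simp add: head_deg_def)

lemma z_n_power_mul_mono:
  "z n ^ a * Defs.mono z w n la mu
    = sc (of_real (inverse q ^ (a * head_deg la))) * Defs.mono z w n (la(n := la n + a)) mu"
proof (induction a)
  case (Suc a)
  have "z n ^ Suc a * Defs.mono z w n la mu
      = sc (of_real (inverse q ^ (a * head_deg la))) * (z n * Defs.mono z w n (la(n := la n + a)) mu)"
    by (simp only: power_Suc mult.assoc Suc mult_sc_commute)
  also have "\<dots> = sc (of_real (inverse q ^ (a * head_deg la))) *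
      (sc (of_real (inverse q ^ head_deg la)) * Defs.mono z w n (la(n := la n + Suc a)) mu)"
    by (simp add: z_n_mul_mono)
  finally show ?case
    by (simp only: sc_mult_assoc of_real_mult[symmetric] power_add[symmetric] mult_Suc add.commute)
qed simp

lemma mono_mul_w_n_power:
  "Defs.mono z w n la mu * w n ^ b
    = sc (of_real (inverse q ^ (b * head_deg mu))) * Defs.mono z w n la (mu(n := mu n + b))"
proof (induction b)
  case (Suc b)
  have "Defs.mono z w n la mu * w n ^ Suc b
      = sc (of_real (inverse q ^ (b * head_deg mu))) * (Defs.mono z w n la (mu(n := mu n + b)) * w n)"
    by (simp only: power_Suc2 mult.assoc[symmetric] Suc)
  also have "\<dots> = sc (of_real (inverse q ^ (b * head_deg mu))) *
      (sc (of_real (inverse q ^ head_deg mu)) * Defs.mono z w n la (mu(n := mu n + Suc b)))"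
    by (simp add: mono_mul_w_n)
  finally show ?case
    by (simp only: sc_mult_assoc of_real_mult[symmetric] power_add[symmetric] mult_Suc add.commute)
qed simp

definition basic_invariant :: "nat \<Rightarrow> nat \<Rightarrow> nat \<Rightarrow> 'a" where
  "basic_invariant l m j = z n ^ (l - j) * w n ^ (m - j) * Q z w n ^ j"

definition basic_coeff :: "nat \<Rightarrow> nat \<Rightarrow> nat \<Rightarrow> nat \<Rightarrow> complex" where
  "basic_coeff l m j s =
     (if s \<le> j then of_real (qfact q j / qfact q (j - s) * inverse q ^ ((l - j + (m - j)) * s)) else 0)"

lemma basic_invariant_expansion:
  "basic_invariant l m j = (\<Sum>la\<in>multi_indices j.
     sc (of_real (qmultinom la * inverse q ^ ((l - j + (m - j)) * head_deg la)))
       * Defs.mono z w n (la(n := la n + (l - j))) (la(n := la n + (m - j))))"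
proof -
  have "basic_invariant l m j = z n ^ (l - j) * (Q z w n ^ j * w n ^ (m - j))"
    by (simp add: basic_invariant_def mult.assoc w_n_power_mul_Q_power)
  also have "\<dots> = (\<Sum>la\<in>multi_indices j.
      sc (of_real (qmultinom la)) * (z n ^ (l - j) * Defs.mono z w n la la * w n ^ (m - j)))"
    unfolding Q_power_expansion sum_distrib_left sum_distrib_right by (simp only: mult.assoc mult_sc_commute)
  also have "\<dots> = (\<Sum>la\<in>multi_indices j.
      sc (of_real (qmultinom la * inverse q ^ ((l - j + (m - j)) * head_deg la)))
       * Defs.mono z w n (la(n := la n + (l - j))) (la(n := la n + (m - j))))"
  proof (intro sum.cong refl)
    fix la
    have "z n ^ (l - j) * Defs.mono z w n la la * w n ^ (m - j)
      = sc (of_real (inverse q ^ ((l - j) * head_deg la) * inverse q ^ ((m - j) * head_deg la)))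
       * Defs.mono z w n (la(n := la n + (l - j))) (la(n := la n + (m - j)))"
      by (simp only: z_n_power_mul_mono mult.assoc mono_mul_w_n_power sc_mult_assoc of_real_mult)
    then show "sc (of_real (qmultinom la)) * (z n ^ (l - j) * Defs.mono z w n la la * w n ^ (m - j))
      = sc (of_real (qmultinom la * inverse q ^ ((l - j + (m - j)) * head_deg la)))
       * Defs.mono z w n (la(n := la n + (l - j))) (la(n := la n + (m - j)))"
      by (simp add: sc_mult_assoc power_add add_mult_distrib mult.assoc)
  qed
  finally show ?thesis .
qed

lemma mi_upd_n: "mi n r \<Longrightarrow> mi n (r(n := v))"
  using n_ge_2 by (simp add: mi_def)

lemma basic_invariant_index_iff:
  assumes jl: "j \<le> l" and jm: "j \<le> m"
  shows "la \<in> multi_indices j \<and> (la(n := la n + (l - j)), la(n := la n + (m - j))) = (r, s) \<longleftrightarrow>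
    (r, s) \<in> diag_indices l m \<and> head_deg r \<le> j \<and> la = r(n := j - head_deg r)"
proof
  assume "la \<in> multi_indices j \<and> (la(n := la n + (l - j)), la(n := la n + (m - j))) = (r, s)"
  then have la: "mi n la" "head_deg la + la n = j"
    and r: "r = la(n := la n + (l - j))" and s: "s = la(n := la n + (m - j))"
    by (auto simp: multi_indices_def deg_eq_head_deg)
  have "deg n r = l" "deg n s = m"
    using la jl jm by (simp_all add: r s deg_eq_head_deg)
  then have "(r, s) \<in> diag_indices l m"
    using la by (simp add: r s diag_indices_def mi_upd_n)
  moreover have hd: "head_deg r = head_deg la"
    by (simp add: r)
  moreover have "la = r(n := j - head_deg r)"
  proof
    fix i
    show "la i = (r(n := j - head_deg r)) i"
      using la hd by (cases "i = n") (simp_all add: r)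
  qed
  ultimately show "(r, s) \<in> diag_indices l m \<and> head_deg r \<le> j \<and> la = r(n := j - head_deg r)"
    using la(2) by linarith
next
  assume "(r, s) \<in> diag_indices l m \<and> head_deg r \<le> j \<and> la = r(n := j - head_deg r)"
  then have D: "(r, s) \<in> diag_indices l m" and le: "head_deg r \<le> j" and la: "la = r(n := j - head_deg r)"
    by simp_all
  then have mi: "mi n r" "mi n s" and agree: "\<forall>i\<in>{1..<n}. r i = s i"
    and rn: "r n = l - head_deg r" and sn: "s n = m - head_deg r"
    using head_deg_cong[of r s] by (auto simp: diag_indices_def deg_eq_head_deg)
  have "la \<in> multi_indices j"
    using mi le by (simp add: la multi_indices_def mi_upd_n deg_eq_head_deg)
  moreover have "la(n := la n + (l - j)) = r"
    using rn le jl by (auto simp: la fun_eq_iff)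
  moreover have "la(n := la n + (m - j)) = s"
  proof
    fix i
    have "i = n \<or> i \<in> {1..<n} \<or> i = 0 \<or> n < i"
      by auto
    then consider "i = n" | "i \<in> {1..<n}" | "i = 0 \<or> n < i"
      by blast
    then show "(la(n := la n + (m - j))) i = s i"
      by cases (use sn le jm agree mi in \<open>auto simp: la mi_def\<close>)
  qed
  ultimately show "la \<in> multi_indices j \<and> (la(n := la n + (l - j)), la(n := la n + (m - j))) = (r, s)"
    by simp
qed

lemma qmultinom_upd_n:
  "qmultinom (r(n := v)) = qfact q (head_deg r + v) / (head_qfact r * qfact q v)"
proof -
  have split: "{1..n} = insert n {1..<n}"
    using n_ge_2 by auto
  have "(\<Prod>i = 1..n. qfact q ((r(n := v)) i)) = qfact q v * (\<Prod>i = 1..<n. qfact q ((r(n := v)) i))"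
    unfolding split by (subst prod.insert) auto
  also have "(\<Prod>i = 1..<n. qfact q ((r(n := v)) i)) = head_qfact r"
    unfolding head_qfact_def by (rule prod.cong) auto
  finally show ?thesis
    by (simp add: qmultinom_def deg_eq_head_deg mult.commute)
qed

lemma coord_basic_invariant:
  assumes jl: "j \<le> l" and jm: "j \<le> m"
  shows "crd (basic_invariant l m j) = invariant_coord l m (basic_coeff l m j)"
proof (rule ext, clarify)
  fix r s
  let ?T = "\<lambda>la. (la(n := la n + (l - j)), la(n := la n + (m - j)))"
  let ?h = "\<lambda>la. qmultinom la * inverse q ^ ((l - j + (m - j)) * head_deg la)"
  have mi: "mi n (fst (?T la)) \<and> mi n (snd (?T la))" if "la \<in> multi_indices j" for la
    using that by (simp add: multi_indices_def mi_upd_n)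
  have "crd (basic_invariant l m j) (r, s) = (\<Sum>la\<in>{la\<in>multi_indices j. ?T la = (r, s)}. of_real (?h la))"
    unfolding basic_invariant_expansion
    using coord_sum_image[OF finite_multi_indices, where h = "\<lambda>la. of_real (?h la)" and T = ?T and t = "(r, s)"] mi
    by simp
  also have "{la\<in>multi_indices j. ?T la = (r, s)} =
      (if (r, s) \<in> diag_indices l m \<and> head_deg r \<le> j then {r(n := j - head_deg r)} else {})"
    using basic_invariant_index_iff[OF jl jm] by auto
  finally show "crd (basic_invariant l m j) (r, s) = invariant_coord l m (basic_coeff l m j) (r, s)"
    using head_qfact_pos[of r] qfact_pos[OF q_pos q_less_1]
    by (auto simp: invariant_coord_def basic_coeff_def qmultinom_upd_n field_simps)
qed

lemma basic_coeff_above_diagonal: "j < s \<Longrightarrow> basic_coeff l m j s = 0"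
  by (simp add: basic_coeff_def)

lemma basic_coeff_diagonal: "basic_coeff l m j j \<noteq> 0"
  using qfact_pos[OF q_pos q_less_1, of j] q_pos by (simp add: basic_coeff_def)

lemma diag_indices_head_deg_le: "(r, s) \<in> diag_indices l m \<Longrightarrow> head_deg r \<le> min l m"
  using head_deg_cong[of r s] by (auto simp: diag_indices_def deg_eq_head_deg)

lemma invariant_coord_cong: "\<forall>s\<le>min l m. g s = g' s \<Longrightarrow> invariant_coord l m g = invariant_coord l m g'"
  using diag_indices_head_deg_le by (fastforce simp: invariant_coord_def)

lemma corner_mem_diag_indices: "s \<le> min l m \<Longrightarrow> (corner l s, corner m s) \<in> diag_indices l m"
  unfolding diag_indices_def by (simp add: mi_corner deg_corner) (simp add: corner_def)

lemma invariant_coord_corner: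
  "s \<le> min l m \<Longrightarrow> invariant_coord l m g (corner l s, corner m s) = g s / of_real (head_qfact (corner l s))"
  by (simp add: invariant_coord_def corner_mem_diag_indices)

lemma coord_basic_combination:
  "crd (\<Sum>j = 0..min l m. sc (c j) * basic_invariant l m j)
    = invariant_coord l m (\<lambda>s. \<Sum>j = 0..min l m. c j * basic_coeff l m j s)"
  by (simp add: fun_eq_iff coord_sum coord_scale coord_basic_invariant invariant_coord_def sum_divide_distrib)

lemma Uinv_iff_basic_combination:
  assumes "x \<in> Zlm n sc z w l m"
  shows "Uinv n q sc z w 1 x \<longleftrightarrow> (\<exists>c. x = (\<Sum>j = 0..min l m. sc (c j) * basic_invariant l m j))"
proof
  assume "Uinv n q sc z w 1 x"
  then obtain g where g: "crd x = invariant_coord l m g"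
    using Uinv_imp_invariant_coord[OF assms] by blast
  obtain c where "\<forall>s\<le>min l m. g s = (\<Sum>j = 0..min l m. c j * basic_coeff l m j s)"
    using triangular_system_solvable[of "basic_coeff l m", OF basic_coeff_above_diagonal basic_coeff_diagonal]
    by blast
  then have "crd x = crd (\<Sum>j = 0..min l m. sc (c j) * basic_invariant l m j)"
    unfolding g coord_basic_combination by (rule invariant_coord_cong)
  then show "\<exists>c. x = (\<Sum>j = 0..min l m. sc (c j) * basic_invariant l m j)"
    using coord_inj by blast
next
  assume "\<exists>c. x = (\<Sum>j = 0..min l m. sc (c j) * basic_invariant l m j)"
  then show "Uinv n q sc z w 1 x"
    using coord_basic_combination invariant_coord_imp_Uinv by blast
qed

lemma basic_combination_eq_0:
  assumes "(\<Sum>j = 0..min l m. sc (c j) * basic_invariant l m j) = 0"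
  shows "\<forall>j\<le>min l m. c j = 0"
proof -
  have "(\<Sum>j = 0..min l m. c j * basic_coeff l m j s) = 0" if s: "s \<le> min l m" for s
  proof -
    have "invariant_coord l m (\<lambda>s. \<Sum>j = 0..min l m. c j * basic_coeff l m j s) (corner l s, corner m s)
        = crd (\<Sum>j = 0..min l m. sc (c j) * basic_invariant l m j) (corner l s, corner m s)"
      by (simp only: coord_basic_combination)
    also have "\<dots> = 0"
      unfolding assms by (rule coord_zero)
    finally have "invariant_coord l m (\<lambda>s. \<Sum>j = 0..min l m. c j * basic_coeff l m j s) (corner l s, corner m s) = 0" .
    then show ?thesis
      using invariant_coord_corner[OF s] head_qfact_pos[of "corner l s"] by simp
  qed
  then show ?thesis
    using triangular_system_unique[of "basic_coeff l m", OF basic_coeff_above_diagonal basic_coeff_diagonal]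
    by blast
qed

lemma inj_on_basic_invariant: "inj_on (basic_invariant l m) {0..min l m}"
proof
  fix i j
  assume i: "i \<in> {0..min l m}" and j: "j \<in> {0..min l m}" and eq: "basic_invariant l m i = basic_invariant l m j"
  have coords: "invariant_coord l m (basic_coeff l m i) = invariant_coord l m (basic_coeff l m j)"
    using eq i j by (simp flip: coord_basic_invariant)
  have same: "basic_coeff l m i s = basic_coeff l m j s" if "s \<le> min l m" for s
    using fun_cong[OF coords, of "(corner l s, corner m s)"] invariant_coord_corner[OF that]
      head_qfact_pos[of "corner l s"]
    by simp
  show "i = j"
  proof (rule ccontr)
    assume "i \<noteq> j"
    then consider "i < j" | "j < i"
      by linarith
    then show False
      by cases (use same[of j] same[of i] i j basic_coeff_above_diagonal basic_coeff_diagonal in auto)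
  qed
qed

lemma basic_invariant_mem_invariants:
  "j \<le> min l m \<Longrightarrow> basic_invariant l m j \<in> Zlm n sc z w l m \<and> Uinv n q sc z w 1 (basic_invariant l m j)"
  by (rule invariant_coord_imp_Uinv) (simp add: coord_basic_invariant)

lemma dim_invariants:
  "vector_space.dim (\<lambda>a x. sc a * x) {\<phi>\<in>Zlm n sc z w l m. Uinv n q sc z w 1 \<phi>} = min l m + 1"
proof -
  interpret vs: vector_space "\<lambda>a x. sc a * x"
    by unfold_locales (simp_all add: distrib_left distrib_right sc_add sc_mult_assoc)
  let ?B = "basic_invariant l m ` {0..min l m}"
  have "?B \<subseteq> {\<phi>\<in>Zlm n sc z w l m. Uinv n q sc z w 1 \<phi>}"
    using basic_invariant_mem_invariants by auto
  moreover have "{\<phi>\<in>Zlm n sc z w l m. Uinv n q sc z w 1 \<phi>} \<subseteq> vs.span ?B"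
  proof
    fix \<phi>
    assume "\<phi> \<in> {\<phi>\<in>Zlm n sc z w l m. Uinv n q sc z w 1 \<phi>}"
    then obtain c where c: "\<phi> = (\<Sum>j = 0..min l m. sc (c j) * basic_invariant l m j)"
      using Uinv_iff_basic_combination by blast
    show "\<phi> \<in> vs.span ?B"
      unfolding c by (intro vs.span_sum vs.span_scale vs.span_base imageI) simp
  qed
  moreover have "vs.independent ?B"
  proof (rule vs.independent_if_scalars_zero)
    fix f x
    assume sum: "(\<Sum>x\<in>?B. sc (f x) * x) = 0" and x: "x \<in> ?B"
    have "(\<Sum>j = 0..min l m. sc (f (basic_invariant l m j)) * basic_invariant l m j) = 0"
      using sum by (simp add: sum.reindex[OF inj_on_basic_invariant])
    then have "\<forall>j\<le>min l m. f (basic_invariant l m j) = 0"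
      by (rule basic_combination_eq_0)
    then show "f x = 0"
      using x by auto
  qed simp
  moreover have "card ?B = min l m + 1"
    using card_image[OF inj_on_basic_invariant] by simp
  ultimately show ?thesis
    by (rule vs.dim_unique)
qed

end

theorem proposition2p2p9:
  fixes n :: nat and q :: real and sc :: "complex \<Rightarrow> 'a::ring_1"
    and z w :: "nat \<Rightarrow> 'a" and l m :: nat
  assumes "0 < q" and "q < 1" and "2 \<le> n"
    and "Zn_alg n q sc z w"
  shows "(\<forall>\<phi>\<in>Zlm n sc z w l m.
           Uinv n q sc z w 1 \<phi> \<longleftrightarrow>
           (\<exists>c :: nat \<Rightarrow> complex.
              \<phi> = (\<Sum>j\<in>{0..min l m}. sc (c j) * z n ^ (l - j) * w n ^ (m - j) * Q z w n ^ j))) \<and>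
         vector_space.dim (\<lambda>a x. sc a * x) {\<phi>\<in>Zlm n sc z w l m. Uinv n q sc z w 1 \<phi>} = min l m + 1"
proof -
  interpret Zn_algebra n q sc z w
    using assms by unfold_locales
  have "sc (c j) * z n ^ (l - j) * w n ^ (m - j) * Q z w n ^ j = sc (c j) * basic_invariant l m j" for c j
    by (simp add: basic_invariant_def mult.assoc)
  then show ?thesis
    using Uinv_iff_basic_combination dim_invariants by simp
qed

end
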